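(* Consider the incentivized RL problem and the Hidden Hallucination algorithm described in the context, with a reward-independent prior $\mathbf{p}$ supported on deterministic MDPs. Assume that $r_{\min}>0$ and $\mathcal{C}:=f_{\min}(\varepsilon_{\mathrm{pun}})>0$, where $\varepsilon_{\mathrm{pun}}=r_{\min}/(2H)$. Run the algorithm with $n_{\mathrm{lrn}}=1$, punishment parameter $\varepsilon_{\mathrm{pun}}$, and $N_{\mathrm{ph}}=\lceil 6H\,r_{\min}^{-1}\mathcal{C}^{-SAH}\rceil$. Then the algorithm visits all reachable triples $(x,a,h)$ almost surely within $K=\mathcal{C}^{-SAH}\cdot O(SAH^2 r_{\min}^{-1})$ episodes. Moreover, the algorithm visits a new $(x,a,h)$ triple in every phase, until all reachable triples are visited.
   Context: MDPs. Fix positive integers $S,A,H$ (states $[S]$, actions $[A]$, stages $[H]$). An MDP model $\mu$ specifies for each triple $(x,a,h)$ a reward distribution $R_\mu(x,a,h)$ on $[0,1]$ (all supported on a common countable set) with mean $r_\mu(x,a,h)$, a transition distribution $p_\mu(\cdot\mid x,a,h)$ on $[S]$ and an initial distribution $p_\mu(\cdot\mid0)$. In an episode $x_1\sim p_\mu(\cdot\mid0)$; at stage $h$ the agent observes $x_h$, picks $a_h$, receives $r_h\sim R_\mu(x_h,a_h,h)$ and moves to $x_{h+1}\sim p_\mu(\cdot\mid x_h,a_h,h)$. A model is deterministic if all these distributions are point masses. $\Pi_{\mathrm{mkv}}$ is the set of deterministic Markov policies $\pi:[S]\times[H]\to[A]$; $V(\pi,\mu)$ is the expected total reward of $\pi$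 in $\mu$. A triple $(x,a,h)$ is visited in an episode if $(x_h,a_h)=(x,a)$; for a deterministic true model $\mu_\star$, $(x,a,h)$ is reachable if some $\pi\in\Pi_{\mathrm{mkv}}$ yields $(x_h,a_h)=(x,a)$. Incentivized RL. A prior $\mathbf{p}$ over models is known to all; $\mu_\star\sim\mathbf{p}$ is unknown. In each episode $k$: the principal chooses a signal $\sigma_k$ via a known algorithm from past trajectories; agent $k$ chooses $\pi_k\in\arg\max_{\pi\in\Pi_{\mathrm{mkv}}}\mathbb{E}[V(\pi,\mu_\star)\mid\sigma_k]$ (fixed known tie-breaking; expectation over all randomness); $\pi_k$ is executed in $\mu_\star$ and the principal observes the trajectory $\tau_k=(x_{k;h},a_{k;h},r_{k;h},h)_h$. Prior parameters. The prior is reward-independent if the mean rewards $r_{\mu_\star}(x,a,h)$ are mutually independent across triples and independent of the transition/initial probabilities. $f_{\min}(\epsilon):=\min_{x,a,h}\Pr_{\mu_\star\sim\mathbf{p}}[r_{\mu_\star}(x,a,h)\le\epsilon]$, $r_{\min}:=\min_{x,a,h}\mathbb{E}_{\mu_\star\sim\mathbf{p}}[r_{\mu_\star}(x,a,h)]$. Algorithm (Hidden Hallucination for MDPs), inputs $N_{\mathrm{ph}},n_{\mathrm{lrn}},\varepsilon_{\mathrm{pun}}$. Phase $\ell$ consists of episodes $(\ell-1)N_{\mathrm{ph}}+1,\dots,\ell N_{\mathrm{ph}}$, and a hallucination episode $k_\ell$ is drawn uniformly from it. A triple is fully explored at phase $\ell$ if visited in at least $n_{\mathrm{lrn}}$ of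 the episodes $k_1,\dots,k_{\ell-1}$, under-explored otherwise. Raw ledger at phase $\ell$: the pairs $(\pi_{k_j},\tau_{k_j})$, $j<\ell$; censored ledger $\lambda_{\mathrm{cens},\ell}$: all rewards removed; honest ledger $\lambda_{\mathrm{hon},\ell}$: rewards kept only at fully explored triples. Punish event $\mathcal{E}_{\mathrm{pun},\ell}=\{r_{\mu_\star}(x,a,h)\le\varepsilon_{\mathrm{pun}}$ for all fully explored $(x,a,h)\}$. At $k=k_\ell$, draw $\mu_{\mathrm{hal},\ell}$ from the posterior of $\mu_\star$ given $\lambda_{\mathrm{cens},\ell}$ and $\mathcal{E}_{\mathrm{pun},\ell}$, and form the hallucinated ledger $\lambda_{\mathrm{hal},\ell}$: rewards removed at under-explored triples, each occurrence of a fully explored triple $(x,a,h)$ given an independent reward drawn from $R_{\mu_{\mathrm{hal},\ell}}(x,a,h)$. The signal is $\lambda_{\mathrm{hal},\ell}$ at $k=k_\ell$ and $\lambda_{\mathrm{hon},\ell}$ at other episodes of phase $\ell$. *)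

theory Defs
  imports "HOL-Probability.Probability"
begin

text \<open>Conventions: states are 0..<S, actions 0..<A, stages 0..<H (0-indexed).
  Phases are 0-indexed as well: phase l (0-based) is phase l+1 of the paper.\<close>

type_synonym policy = "nat \<Rightarrow> nat \<Rightarrow> nat"            \<comment> \<open>pi x h = action\<close>
type_synonym tstep = "nat \<times> nat \<times> real option \<times> nat" \<comment> \<open>(x, a, reward or removed, h)\<close>
type_synonym entry = "policy \<times> tstep list"
type_synonym ledger = "entry list"

text \<open>Deterministic MDP model: initial state, transition function, reward function
  (a deterministic model has point-mass reward distributions, whose mean is rew).\<close>
datatype dmodel = DM (init: nat) (trans: "nat \<Rightarrow> nat \<Rightarrow> nat \<Rightarrow> nat") (rew: "nat \<Rightarrow> nat \<Rightarrow> nat \<Rightarrow> real")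

definition triples :: "nat \<Rightarrow> nat \<Rightarrow> nat \<Rightarrow> (nat \<times> nat \<times> nat) set" where
  "triples S A H = {..<S} \<times> {..<A} \<times> {..<H}"

definition valid_model :: "nat \<Rightarrow> nat \<Rightarrow> nat \<Rightarrow> dmodel \<Rightarrow> bool" where
  "valid_model S A H \<mu> \<longleftrightarrow> init \<mu> < S \<and>
     (\<forall>x<S. \<forall>a<A. \<forall>h<H. trans \<mu> x a h < S \<and> 0 \<le> rew \<mu> x a h \<and> rew \<mu> x a h \<le> 1)"

text \<open>Deterministic Markov policies (normalised to 0 outside [S] x [H], so the set is finite).\<close>
definition policies :: "nat \<Rightarrow> nat \<Rightarrow> nat \<Rightarrow> policy set" where
  "policies S A H = {\<pi>. \<forall>x h. (x < S \<and> h < H \<longrightarrow> \<pi> x h < A) \<and> (\<not> (x < S \<and> h < H) \<longrightarrow> \<pi> x h = 0)}"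

primrec st :: "dmodel \<Rightarrow> policy \<Rightarrow> nat \<Rightarrow> nat" where
  "st \<mu> \<pi> 0 = init \<mu>"
| "st \<mu> \<pi> (Suc h) = trans \<mu> (st \<mu> \<pi> h) (\<pi> (st \<mu> \<pi> h) h) h"

definition raw_traj :: "nat \<Rightarrow> dmodel \<Rightarrow> policy \<Rightarrow> tstep list" where
  "raw_traj H \<mu> \<pi> = map (\<lambda>h. (st \<mu> \<pi> h, \<pi> (st \<mu> \<pi> h) h,
       Some (rew \<mu> (st \<mu> \<pi> h) (\<pi> (st \<mu> \<pi> h) h) h), h)) [0..<H]"

definition visits :: "nat \<Rightarrow> dmodel \<Rightarrow> policy \<Rightarrow> (nat \<times> nat \<times> nat) set" where
  "visits H \<mu> \<pi> = {(st \<mu> \<pi> h, \<pi> (st \<mu> \<pi> h) h, h) | h. h < H}"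

definition episode_value :: "nat \<Rightarrow> policy \<Rightarrow> dmodel \<Rightarrow> real" where
  "episode_value H \<pi> \<mu> = (\<Sum>h<H. rew \<mu> (st \<mu> \<pi> h) (\<pi> (st \<mu> \<pi> h) h) h)"

definition reachable :: "nat \<Rightarrow> nat \<Rightarrow> nat \<Rightarrow> dmodel \<Rightarrow> (nat \<times> nat \<times> nat) set" where
  "reachable S A H \<mu> = (\<Union>\<pi>\<in>policies S A H. visits H \<mu> \<pi>)"

definition dyn :: "nat \<Rightarrow> nat \<Rightarrow> nat \<Rightarrow> dmodel \<Rightarrow> nat \<times> (nat \<Rightarrow> nat \<Rightarrow> nat \<Rightarrow> nat)" where
  "dyn S A H \<mu> = (init \<mu>, \<lambda>x a h. if x < S \<and> a < A \<and> h < H then trans \<mu> x a h else 0)"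

definition rew3 :: "dmodel \<Rightarrow> nat \<times> nat \<times> nat \<Rightarrow> real" where
  "rew3 \<mu> t = (case t of (x, a, h) \<Rightarrow> rew \<mu> x a h)"

definition reward_indep :: "nat \<Rightarrow> nat \<Rightarrow> nat \<Rightarrow> dmodel pmf \<Rightarrow> bool" where
  "reward_indep S A H p \<longleftrightarrow>
     (\<forall>E B. measure_pmf.prob p {\<mu>. dyn S A H \<mu> \<in> E \<and> (\<forall>t\<in>triples S A H. rew3 \<mu> t \<in> B t)}
        = measure_pmf.prob p {\<mu>. dyn S A H \<mu> \<in> E} *
          (\<Prod>t\<in>triples S A H. measure_pmf.prob p {\<mu>. rew3 \<mu> t \<in> B t}))"

definition f_min :: "nat \<Rightarrow> nat \<Rightarrow> nat \<Rightarrow> dmodel pmf \<Rightarrow> real \<Rightarrow> real" where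
  "f_min S A H p \<epsilon> = Min ((\<lambda>t. measure_pmf.prob p {\<mu>. rew3 \<mu> t \<le> \<epsilon>}) ` triples S A H)"

definition r_min :: "nat \<Rightarrow> nat \<Rightarrow> nat \<Rightarrow> dmodel pmf \<Rightarrow> real" where
  "r_min S A H p = Min ((\<lambda>t. measure_pmf.expectation p (\<lambda>\<mu>. rew3 \<mu> t)) ` triples S A H)"

definition ent_visits :: "entry \<Rightarrow> (nat \<times> nat \<times> nat) set" where
  "ent_visits e = {(x, a, h) | x a r h. (x, a, r, h) \<in> set (snd e)}"

definition explored :: "nat \<Rightarrow> ledger \<Rightarrow> (nat \<times> nat \<times> nat) set" where
  "explored n L = {t. n \<le> length (filter (\<lambda>e. t \<in> ent_visits e) L)}"

definition set_rewards :: "(nat \<times> nat \<times> nat \<Rightarrow> real option \<Rightarrow> real option) \<Rightarrow> ledger \<Rightarrow> ledger" where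
  "set_rewards f L = map (\<lambda>(\<pi>, tr). (\<pi>, map (\<lambda>(x, a, r, h). (x, a, f (x, a, h) r, h)) tr)) L"

definition cens :: "ledger \<Rightarrow> ledger" where
  "cens L = set_rewards (\<lambda>_ _. None) L"

definition hon :: "nat \<Rightarrow> ledger \<Rightarrow> ledger" where
  "hon n L = set_rewards (\<lambda>t r. if t \<in> explored n L then r else None) L"

definition hal :: "nat \<Rightarrow> ledger \<Rightarrow> dmodel \<Rightarrow> ledger" where
  "hal n L \<mu>h = set_rewards (\<lambda>t r. if t \<in> explored n L then Some (rew3 \<mu>h t) else None) L"

definition pun :: "nat \<Rightarrow> real \<Rightarrow> dmodel \<Rightarrow> ledger \<Rightarrow> bool" where
  "pun n \<epsilon> \<mu> L \<longleftrightarrow> (\<forall>t\<in>explored n L. rew3 \<mu> t \<le> \<epsilon>)"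

text \<open>Dl is the joint law of (true model, raw ledger) at the start of a phase.
  Posterior of mu* given the censored ledger and the punish event.\<close>
definition post :: "nat \<Rightarrow> real \<Rightarrow> (dmodel \<times> ledger) pmf \<Rightarrow> ledger \<Rightarrow> dmodel pmf" where
  "post n \<epsilon> Dl L =
    (let E = {(\<mu>, L'). cens L' = cens L \<and> pun n \<epsilon> \<mu> L'} in
     if set_pmf Dl \<inter> E \<noteq> {} then map_pmf fst (cond_pmf Dl E) else map_pmf fst Dl)"

text \<open>Joint law of (mu*, signal) seen by an agent of the phase: with probability 1/N_ph
  the agent is the hallucination episode (signal = hallucinated ledger), otherwise
  the signal is the honest ledger.\<close>
definition sigJ :: "nat \<Rightarrow> nat \<Rightarrow> real \<Rightarrow> (dmodel \<times> ledger) pmf \<Rightarrow> (dmodel \<times> ledger) pmf" where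
  "sigJ N n \<epsilon> Dl = bind_pmf Dl (\<lambda>(\<mu>, L). bind_pmf (bernoulli_pmf (1 / real N)) (\<lambda>b.
      if b then map_pmf (\<lambda>\<mu>h. (\<mu>, hal n L \<mu>h)) (post n \<epsilon> Dl L)
      else return_pmf (\<mu>, hon n L)))"

definition cond_exp_value :: "nat \<Rightarrow> (dmodel \<times> ledger) pmf \<Rightarrow> ledger \<Rightarrow> policy \<Rightarrow> real" where
  "cond_exp_value H J \<sigma> \<pi> =
     measure_pmf.expectation (cond_pmf J {\<omega>. snd \<omega> = \<sigma>}) (\<lambda>\<omega>. episode_value H \<pi> (fst \<omega>))"

definition agent :: "nat \<Rightarrow> nat \<Rightarrow> nat \<Rightarrow> (policy set \<Rightarrow> policy) \<Rightarrow> (dmodel \<times> ledger) pmf \<Rightarrow> ledger \<Rightarrow> policy" where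
  "agent S A H tb J \<sigma> = tb {\<pi> \<in> policies S A H. \<forall>\<pi>'\<in>policies S A H.
       cond_exp_value H J \<sigma> \<pi>' \<le> cond_exp_value H J \<sigma> \<pi>}"

definition hh_step :: "nat \<Rightarrow> nat \<Rightarrow> nat \<Rightarrow> nat \<Rightarrow> nat \<Rightarrow> real \<Rightarrow> (policy set \<Rightarrow> policy)
    \<Rightarrow> (dmodel \<times> ledger) pmf \<Rightarrow> dmodel \<times> ledger \<Rightarrow> (dmodel \<times> ledger) pmf" where
  "hh_step S A H N n \<epsilon> tb Dl \<omega> = (case \<omega> of (\<mu>, L) \<Rightarrow>
     map_pmf (\<lambda>\<mu>h. let \<pi> = agent S A H tb (sigJ N n \<epsilon> Dl) (hal n L \<mu>h)
                    in (\<mu>, L @ [(\<pi>, raw_traj H \<mu> \<pi>)])) (post n \<epsilon> Dl L))"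

primrec hh_dist :: "nat \<Rightarrow> nat \<Rightarrow> nat \<Rightarrow> nat \<Rightarrow> nat \<Rightarrow> real \<Rightarrow> (policy set \<Rightarrow> policy)
    \<Rightarrow> dmodel pmf \<Rightarrow> nat \<Rightarrow> (dmodel \<times> ledger) pmf" where
  "hh_dist S A H N n \<epsilon> tb p 0 = map_pmf (\<lambda>\<mu>. (\<mu>, [])) p"
| "hh_dist S A H N n \<epsilon> tb p (Suc l) =
     bind_pmf (hh_dist S A H N n \<epsilon> tb p l) (hh_step S A H N n \<epsilon> tb (hh_dist S A H N n \<epsilon> tb p l))"

text \<open>Policy of the (identical) non-hallucination episodes of phase l.\<close>
definition honest_pol :: "nat \<Rightarrow> nat \<Rightarrow> nat \<Rightarrow> nat \<Rightarrow> nat \<Rightarrow> real \<Rightarrow> (policy set \<Rightarrow> policy)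
    \<Rightarrow> dmodel pmf \<Rightarrow> nat \<Rightarrow> ledger \<Rightarrow> policy" where
  "honest_pol S A H N n \<epsilon> tb p l L =
     agent S A H tb (sigJ N n \<epsilon> (hh_dist S A H N n \<epsilon> tb p l)) (hon n (take l L))"

text \<open>Triples visited in some episode of phase l (hallucination episode + the others).\<close>
definition phase_visits :: "nat \<Rightarrow> nat \<Rightarrow> nat \<Rightarrow> nat \<Rightarrow> nat \<Rightarrow> real \<Rightarrow> (policy set \<Rightarrow> policy)
    \<Rightarrow> dmodel pmf \<Rightarrow> nat \<Rightarrow> dmodel \<times> ledger \<Rightarrow> (nat \<times> nat \<times> nat) set" where
  "phase_visits S A H N n \<epsilon> tb p l \<omega> =
     ent_visits (snd \<omega> ! l) \<union> visits H (fst \<omega>) (honest_pol S A H N n \<epsilon> tb p l (snd \<omega>))"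

end

(*
  The raw ledger of a phase arises from the true model by running policies whose law depends
  only on the dynamics: the signals of the hallucination episodes are computed from the
  censored ledger and from posterior samples.  Hence, given the censored ledger, the rewards of
  the explored triples and of any unexplored triple keep their independent prior laws.

  Suppose that a reachable triple is still unexplored but the agent of the hallucination
  episode stays on explored triples.  Given its signal, with weight 1 - 1/N the signal is the
  honest ledger, so the true rewards on the explored triples are the hallucinated ones, which
  the punish event keeps below eps = r_min/(2H); there the agent's policy is worth at most
  r_min/2.  A policy that follows explored triples up to its first exit t0 is worth at least the
  prior mean reward of t0, which is at least r_min, whatever the signal.  The hallucinated
  case has weight 1/N and its posterior weight is controlled by the prior probability
  f_min^(SAH) of the punish event, so N >= 6H/(r_min f_min^(SAH)) makes the exploring policy
  strictly better, contradicting optimality.  Thus every phase visits a new triple, and SAH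
  phases visit all reachable triples.
*)
theory Submission
  imports Defs
begin

(* Keep the numeral 1 (the parameter n_lrn) intact, so that lemmas about hal 1, explored 1
   and hh_dist ... 1 ... apply by simplification. *)
declare One_nat_def [simp del]

section \<open>Expectations over discrete distributions\<close>

lemma integrable_measure_pmf_bounded:
  fixes f :: "'a \<Rightarrow> real"
  assumes "\<And>x. x \<in> set_pmf M \<Longrightarrow> \<bar>f x\<bar> \<le> B"
  shows "integrable (measure_pmf M) f"
  using assms by (auto intro!: measure_pmf.integrable_const_bound[where B=B] simp: AE_measure_pmf_iff)

lemma integral_mono_pmf_bounded:
  fixes f g :: "'a \<Rightarrow> real"
  assumes "\<And>x. x \<in> set_pmf M \<Longrightarrow> \<bar>f x\<bar> \<le> B" "\<And>x. x \<in> set_pmf M \<Longrightarrow> \<bar>g x\<bar> \<le> B"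
    and "\<And>x. x \<in> set_pmf M \<Longrightarrow> f x \<le> g x"
  shows "measure_pmf.expectation M f \<le> measure_pmf.expectation M g"
  using assms by (intro integral_mono_AE integrable_measure_pmf_bounded) (auto simp: AE_measure_pmf_iff)

lemma integral_bind_pmf_bounded:
  fixes f :: "'b \<Rightarrow> real"
  assumes bounded: "\<And>x. x \<in> set_pmf (bind_pmf M N) \<Longrightarrow> \<bar>f x\<bar> \<le> B"
  shows "measure_pmf.expectation (bind_pmf M N) f
    = measure_pmf.expectation M (\<lambda>x. measure_pmf.expectation (N x) f)"
proof -
  define g where "g x = (if x \<in> set_pmf (bind_pmf M N) then f x else 0)" for x
  have g: "\<bar>g x\<bar> \<le> \<bar>B\<bar>" for x
    using bounded by (auto simp: g_def) (meson abs_ge_self order_trans)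
  have "measure_pmf.expectation (bind_pmf M N) f = measure_pmf.expectation (bind_pmf M N) g"
    by (intro integral_cong_AE) (auto simp: g_def AE_measure_pmf_iff)
  also have "\<dots> = integral\<^sup>L (measure_pmf M \<bind> (\<lambda>x. measure_pmf (N x))) g"
    by (simp add: measure_pmf_bind)
  also have "\<dots> = measure_pmf.expectation M (\<lambda>x. measure_pmf.expectation (N x) g)"
    using g by (intro integral_bind[where K="count_space UNIV" and B="\<bar>B\<bar>" and B'=1])
      (auto simp: space_subprob_algebra measure_pmf.subprob_space_axioms
        intro!: measure_pmf.finite_measure_axioms)
  also have "\<dots> = measure_pmf.expectation M (\<lambda>x. measure_pmf.expectation (N x) f)"
    by (intro integral_cong_AE) (auto simp: g_def AE_measure_pmf_iff intro!: integral_cong_AE)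
  finally show ?thesis .
qed

lemma measure_cond_pmf:
  assumes "set_pmf p \<inter> s \<noteq> {}"
  shows "measure_pmf.prob (cond_pmf p s) X = measure_pmf.prob p (s \<inter> X) / measure_pmf.prob p s"
  using assms by (simp add: cond_pmf.rep_eq emeasure_measure_pmf_not_zero)

lemma integral_cond_pmf:
  fixes f :: "'a \<Rightarrow> real"
  assumes "set_pmf p \<inter> s \<noteq> {}"
  shows "measure_pmf.expectation (cond_pmf p s) f
    = measure_pmf.expectation p (\<lambda>x. indicator s x * f x) / measure_pmf.prob p s"
proof -
  have pos: "measure_pmf.prob p s > 0"
    using assms measure_pmf_posI by fastforce
  have "measure_pmf (cond_pmf p s) = density (measure_pmf p) (\<lambda>x. ennreal (indicator s x / measure_pmf.prob p s))"
    using assms unfolding cond_pmf.rep_eq[OF assms] uniform_measure_def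
    by (intro density_cong) (auto simp: measure_pmf.emeasure_eq_measure divide_ennreal[symmetric] pos
        split: split_indicator)
  then show ?thesis
    by (simp add: integral_density)
qed

lemma integral_pair_pmf_mult:
  fixes u :: "'a \<Rightarrow> real" and w :: "'b \<Rightarrow> real"
  assumes "\<And>a. a \<in> set_pmf P \<Longrightarrow> \<bar>u a\<bar> \<le> Bu" "\<And>b. b \<in> set_pmf Q \<Longrightarrow> \<bar>w b\<bar> \<le> Bw"
  shows "measure_pmf.expectation (pair_pmf P Q) (\<lambda>(a, b). u a * w b)
    = measure_pmf.expectation P u * measure_pmf.expectation Q w"
proof -
  have "measure_pmf.expectation (pair_pmf P Q) (\<lambda>(a, b). u a * w b)
      = measure_pmf.expectation P (\<lambda>a. measure_pmf.expectation (map_pmf (Pair a) Q) (\<lambda>(a, b). u a * w b))"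
    unfolding pair_pmf_def map_pmf_def[symmetric]
    using assms by (intro integral_bind_pmf_bounded[where B="Bu * Bw"])
      (auto simp: abs_mult intro!: mult_mono, meson abs_ge_zero order_trans)
  also have "\<dots> = measure_pmf.expectation P (\<lambda>a. u a * measure_pmf.expectation Q w)"
    by simp
  finally show ?thesis by simp
qed

lemma integral_indicator_mono_pmf:
  fixes f g :: "'a \<Rightarrow> real"
  assumes "\<And>x. x \<in> set_pmf M \<Longrightarrow> \<bar>f x\<bar> \<le> B" "\<And>x. x \<in> set_pmf M \<Longrightarrow> \<bar>g x\<bar> \<le> B"
    and "\<And>x. x \<in> set_pmf M \<Longrightarrow> x \<in> X \<Longrightarrow> f x \<le> g x"
  shows "measure_pmf.expectation M (\<lambda>x. indicator X x * f x) \<le> measure_pmf.expectation M (\<lambda>x. indicator X x * g x)"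
  using assms by (intro integral_mono_pmf_bounded[where B=B]) (auto simp: indicator_def intro: order_trans[OF abs_ge_zero])

lemma integral_linear_pmf_bounded:
  fixes f g :: "'a \<Rightarrow> real"
  assumes "\<And>x. x \<in> set_pmf M \<Longrightarrow> \<bar>f x\<bar> \<le> B" "\<And>x. x \<in> set_pmf M \<Longrightarrow> \<bar>g x\<bar> \<le> B"
  shows "measure_pmf.expectation M (\<lambda>x. a * f x + b * g x)
    = a * measure_pmf.expectation M f + b * measure_pmf.expectation M g"
proof -
  have "integrable (measure_pmf M) f" "integrable (measure_pmf M) g"
    by (rule integrable_measure_pmf_bounded, rule assms(1), assumption)
      (rule integrable_measure_pmf_bounded, rule assms(2), assumption)
  then show ?thesis
    by simp
qed

section \<open>Reward independence\<close>

lemma finite_triples: "finite (triples S A H)"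
  by (simp add: triples_def)

lemma card_triples: "card (triples S A H) = S * A * H"
  by (simp add: triples_def card_cartesian_product)

lemma reward_indep_law:
  assumes "reward_indep S A H p"
  defines "T \<equiv> triples S A H"
  shows "map_pmf (\<lambda>\<mu>. (dyn S A H \<mu>, \<lambda>t. if t \<in> T then rew3 \<mu> t else 0)) p
    = pair_pmf (map_pmf (dyn S A H) p) (Pi_pmf T 0 (\<lambda>t. map_pmf (\<lambda>\<mu>. rew3 \<mu> t) p))"
proof (rule pmf_eqI)
  fix z :: "(nat \<times> (nat \<Rightarrow> nat \<Rightarrow> nat \<Rightarrow> nat)) \<times> (nat \<times> nat \<times> nat \<Rightarrow> real)"
  obtain d v where z: "z = (d, v)" by (cases z)
  let ?X = "\<lambda>\<mu>. (dyn S A H \<mu>, \<lambda>t. if t \<in> T then rew3 \<mu> t else 0)"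
  show "pmf (map_pmf ?X p) z
    = pmf (pair_pmf (map_pmf (dyn S A H) p) (Pi_pmf T 0 (\<lambda>t. map_pmf (\<lambda>\<mu>. rew3 \<mu> t) p))) z"
  proof (cases "\<forall>t. t \<notin> T \<longrightarrow> v t = 0")
    case True
    have "?X -` {z} = {\<mu>. dyn S A H \<mu> \<in> {d} \<and> (\<forall>t\<in>T. rew3 \<mu> t \<in> {v t})}"
      using True by (auto simp: z fun_eq_iff)
    then have "pmf (map_pmf ?X p) z
        = measure_pmf.prob p {\<mu>. dyn S A H \<mu> \<in> {d} \<and> (\<forall>t\<in>T. rew3 \<mu> t \<in> {v t})}"
      by (simp only: pmf_map)
    then show ?thesis
      using assms(1)[unfolded reward_indep_def, rule_format, of "{d}" "\<lambda>t. {v t}"] True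
      by (simp add: z pmf_pair pmf_Pi T_def finite_triples pmf_map vimage_def)
  next
    case False
    then have "?X -` {z} = {}"
      by (auto simp: z fun_eq_iff)
    then have "pmf (map_pmf ?X p) z = 0"
      by (simp only: pmf_map measure_empty)
    then show ?thesis
      using False by (simp add: z pmf_pair pmf_Pi T_def finite_triples) blast
  qed
qed

lemma reward_indep_expectation_prod:
  fixes g :: "dmodel \<Rightarrow> real" and k :: "nat \<times> nat \<times> nat \<Rightarrow> real \<Rightarrow> real"
  assumes indep: "reward_indep S A H p"
    and g: "\<And>\<mu>. \<mu> \<in> set_pmf p \<Longrightarrow> g \<mu> = g' (dyn S A H \<mu>)"
    and g_bounded: "\<And>\<mu>. \<mu> \<in> set_pmf p \<Longrightarrow> \<bar>g \<mu>\<bar> \<le> B"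
    and k_bounded: "\<And>t \<mu>. t \<in> triples S A H \<Longrightarrow> \<mu> \<in> set_pmf p \<Longrightarrow>
      0 \<le> k t (rew3 \<mu> t) \<and> k t (rew3 \<mu> t) \<le> B'"
  shows "measure_pmf.expectation p (\<lambda>\<mu>. g \<mu> * (\<Prod>t\<in>triples S A H. k t (rew3 \<mu> t)))
    = measure_pmf.expectation p g * (\<Prod>t\<in>triples S A H. measure_pmf.expectation p (\<lambda>\<mu>. k t (rew3 \<mu> t)))"
proof -
  define T where "T = triples S A H"
  define X where "X \<mu> = (dyn S A H \<mu>, \<lambda>t. if t \<in> T then rew3 \<mu> t else 0)" for \<mu>
  define F where "F = (\<lambda>(d, v). g' d * (\<Prod>t\<in>T. k t (v t)))"
  have fin: "finite T"
    by (simp add: T_def finite_triples)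
  have "measure_pmf.expectation p (\<lambda>\<mu>. g \<mu> * (\<Prod>t\<in>T. k t (rew3 \<mu> t)))
      = measure_pmf.expectation (map_pmf X p) F"
    by (auto simp: AE_measure_pmf_iff F_def X_def g intro!: integral_cong_AE prod.cong)
  also have "map_pmf X p = pair_pmf (map_pmf (dyn S A H) p) (Pi_pmf T 0 (\<lambda>t. map_pmf (\<lambda>\<mu>. rew3 \<mu> t) p))"
    unfolding X_def T_def by (rule reward_indep_law[OF indep])
  also have "measure_pmf.expectation \<dots> F
     = measure_pmf.expectation (map_pmf (dyn S A H) p) g' *
       measure_pmf.expectation (Pi_pmf T 0 (\<lambda>t. map_pmf (\<lambda>\<mu>. rew3 \<mu> t) p)) (\<lambda>v. \<Prod>t\<in>T. k t (v t))"
    unfolding F_def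
  proof (rule integral_pair_pmf_mult[where Bu=B and Bw="B' ^ card T"])
    fix v assume "v \<in> set_pmf (Pi_pmf T 0 (\<lambda>t. map_pmf (\<lambda>\<mu>. rew3 \<mu> t) p))"
    then have "\<forall>t\<in>T. v t \<in> (\<lambda>\<mu>. rew3 \<mu> t) ` set_pmf p"
      by (auto simp: set_Pi_pmf[OF fin] PiE_dflt_def)
    then have "(\<Prod>t\<in>T. \<bar>k t (v t)\<bar>) \<le> (\<Prod>t\<in>T. B')"
      using k_bounded by (intro prod_mono) (fastforce simp: T_def)
    then show "\<bar>\<Prod>t\<in>T. k t (v t)\<bar> \<le> B' ^ card T"
      by (simp add: abs_prod)
  qed (use g g_bounded in auto)
  also have "measure_pmf.expectation (map_pmf (dyn S A H) p) g' = measure_pmf.expectation p g"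
    by (auto simp: AE_measure_pmf_iff g intro!: integral_cong_AE)
  also have "measure_pmf.expectation (Pi_pmf T 0 (\<lambda>t. map_pmf (\<lambda>\<mu>. rew3 \<mu> t) p)) (\<lambda>v. \<Prod>t\<in>T. k t (v t))
     = (\<Prod>t\<in>T. measure_pmf.expectation (map_pmf (\<lambda>\<mu>. rew3 \<mu> t) p) (k t))"
    using k_bounded
    by (intro expectation_prod_Pi_pmf[OF fin] integrable_measure_pmf_bounded[where B=B'])
      (fastforce simp: T_def)+
  finally show ?thesis
    by (simp add: T_def)
qed

lemma factors_through:
  assumes "\<And>x y. x \<in> X \<Longrightarrow> y \<in> X \<Longrightarrow> f x = f y \<Longrightarrow> g x = g y"
  obtains g' where "\<And>x. x \<in> X \<Longrightarrow> g x = g' (f x)"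
proof
  fix x assume "x \<in> X"
  then have "\<exists>y. y \<in> X \<and> f y = f x"
    by blast
  then have "(SOME y. y \<in> X \<and> f y = f x) \<in> X \<and> f (SOME y. y \<in> X \<and> f y = f x) = f x"
    by (rule someI_ex)
  then show "g x = (\<lambda>d. g (SOME y. y \<in> X \<and> f y = d)) (f x)"
    using assms[of x "SOME y. y \<in> X \<and> f y = f x"] \<open>x \<in> X\<close> by simp
qed

lemma prod_if_subset_point:
  fixes a :: "'a \<Rightarrow> 'b::comm_monoid_mult"
  assumes "finite T" "E \<subseteq> T" "t0 \<in> T" "t0 \<notin> E"
  shows "(\<Prod>t\<in>T. if t \<in> E then a t else if t = t0 then b else 1) = prod a E * b"
proof -
  have "(\<Prod>t\<in>T. if t \<in> E then a t else if t = t0 then b else 1)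
      = (\<Prod>t\<in>T \<inter> {t. t \<in> E}. a t) * (\<Prod>t\<in>T \<inter> - {t. t \<in> E}. if t = t0 then b else 1)"
    by (rule prod.If_cases[OF assms(1)])
  also have "T \<inter> {t. t \<in> E} = E"
    using assms(2) by auto
  also have "(\<Prod>t\<in>T \<inter> - {t. t \<in> E}. if t = t0 then b else 1) = b"
    using assms(1,3,4) by (subst prod.delta) auto
  finally show ?thesis .
qed

lemma prod_indicator: "finite E \<Longrightarrow> (\<Prod>t\<in>E. indicator (B t) (f t) :: real) = (if \<forall>t\<in>E. f t \<in> B t then 1 else 0)"
  by (induction rule: finite_induct) (auto simp: indicator_def)

lemma reward_indep_expectation:
  fixes g :: "dmodel \<Rightarrow> real" and w :: "real \<Rightarrow> real"
  assumes indep: "reward_indep S A H p"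
    and g: "\<And>\<mu> \<mu>'. \<mu> \<in> set_pmf p \<Longrightarrow> \<mu>' \<in> set_pmf p \<Longrightarrow> dyn S A H \<mu> = dyn S A H \<mu>' \<Longrightarrow> g \<mu> = g \<mu>'"
    and g_bounded: "\<And>\<mu>. \<mu> \<in> set_pmf p \<Longrightarrow> \<bar>g \<mu>\<bar> \<le> B"
    and E: "E \<subseteq> triples S A H" and t0: "t0 \<in> triples S A H" "t0 \<notin> E"
    and w: "\<And>\<mu>. \<mu> \<in> set_pmf p \<Longrightarrow> 0 \<le> w (rew3 \<mu> t0) \<and> w (rew3 \<mu> t0) \<le> 1"
  shows "measure_pmf.expectation p (\<lambda>\<mu>. g \<mu> * indicator {\<mu>. \<forall>t\<in>E. rew3 \<mu> t \<in> Bs t} \<mu> * w (rew3 \<mu> t0))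
     = measure_pmf.expectation p g * (\<Prod>t\<in>E. measure_pmf.prob p {\<mu>. rew3 \<mu> t \<in> Bs t})
         * measure_pmf.expectation p (\<lambda>\<mu>. w (rew3 \<mu> t0))"
proof -
  define T where "T = triples S A H"
  have fin: "finite T" "finite E"
    using finite_subset[OF E finite_triples] by (auto simp: T_def finite_triples)
  define k where "k t x = (if t \<in> E then indicator (Bs t) x else if t = t0 then w x else 1)" for t and x :: real
  obtain g' where g': "\<And>\<mu>. \<mu> \<in> set_pmf p \<Longrightarrow> g \<mu> = g' (dyn S A H \<mu>)"
    using factors_through[of "set_pmf p" "dyn S A H" g] g by blast
  have "(\<Prod>t\<in>T. k t (rew3 \<mu> t)) = indicator {\<mu>. \<forall>t\<in>E. rew3 \<mu> t \<in> Bs t} \<mu> * w (rew3 \<mu> t0)" for \<mu>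
  proof -
    have "(\<Prod>t\<in>T. k t (rew3 \<mu> t))
        = (\<Prod>t\<in>T. if t \<in> E then indicator (Bs t) (rew3 \<mu> t) else if t = t0 then w (rew3 \<mu> t0) else 1)"
      by (intro prod.cong) (auto simp: k_def)
    also have "\<dots> = (\<Prod>t\<in>E. indicator (Bs t) (rew3 \<mu> t)) * w (rew3 \<mu> t0)"
      using fin(1) E t0 unfolding T_def by (rule prod_if_subset_point)
    also have "\<dots> = indicator {\<mu>. \<forall>t\<in>E. rew3 \<mu> t \<in> Bs t} \<mu> * w (rew3 \<mu> t0)"
      by (simp only: prod_indicator[OF fin(2)]) (simp add: indicator_def)
    finally show ?thesis .
  qed
  then have "measure_pmf.expectation p (\<lambda>\<mu>. g \<mu> * indicator {\<mu>. \<forall>t\<in>E. rew3 \<mu> t \<in> Bs t} \<mu> * w (rew3 \<mu> t0))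
      = measure_pmf.expectation p (\<lambda>\<mu>. g \<mu> * (\<Prod>t\<in>T. k t (rew3 \<mu> t)))"
    by (simp add: mult.assoc)
  also have "\<dots> = measure_pmf.expectation p g * (\<Prod>t\<in>T. measure_pmf.expectation p (\<lambda>\<mu>. k t (rew3 \<mu> t)))"
    unfolding T_def
    by (rule reward_indep_expectation_prod[where g=g and g'=g' and B=B and k=k and B'=1, OF indep g' g_bounded])
      (use w in \<open>auto simp: k_def indicator_def\<close>)
  also have "(\<Prod>t\<in>T. measure_pmf.expectation p (\<lambda>\<mu>. k t (rew3 \<mu> t)))
     = (\<Prod>t\<in>T. (if t \<in> E then measure_pmf.prob p {\<mu>. rew3 \<mu> t \<in> Bs t}
          else if t = t0 then measure_pmf.expectation p (\<lambda>\<mu>. w (rew3 \<mu> t0)) else 1))"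
  proof (intro prod.cong)
    fix t
    have "(\<lambda>\<mu>. indicator (Bs t) (rew3 \<mu> t)) = (indicator {\<mu>. rew3 \<mu> t \<in> Bs t} :: _ \<Rightarrow> real)"
      by (auto simp: indicator_def)
    then show "measure_pmf.expectation p (\<lambda>\<mu>. k t (rew3 \<mu> t)) = (if t \<in> E then measure_pmf.prob p {\<mu>. rew3 \<mu> t \<in> Bs t}
          else if t = t0 then measure_pmf.expectation p (\<lambda>\<mu>. w (rew3 \<mu> t0)) else 1)"
      by (simp add: k_def)
  qed simp
  finally show ?thesis
    using prod_if_subset_point[OF fin(1) E[folded T_def] t0[folded T_def],
        of "\<lambda>t. measure_pmf.prob p {\<mu>. rew3 \<mu> t \<in> Bs t}" "measure_pmf.expectation p (\<lambda>\<mu>. w (rew3 \<mu> t0))"]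
    by (simp add: mult.assoc)
qed

section \<open>Ledgers\<close>

definition ledger_of :: "nat \<Rightarrow> dmodel \<Rightarrow> policy list \<Rightarrow> ledger" where
  "ledger_of H \<mu> pols = map (\<lambda>\<pi>. (\<pi>, raw_traj H \<mu> \<pi>)) pols"

definition agrees_on :: "(nat \<times> nat \<times> nat) set \<Rightarrow> dmodel \<Rightarrow> dmodel \<Rightarrow> bool" where
  "agrees_on E \<mu> \<mu>' \<longleftrightarrow> (\<forall>t\<in>E. rew3 \<mu> t = rew3 \<mu>' t)"

abbreviation same_cens :: "ledger \<Rightarrow> (dmodel \<times> ledger) set" where
  "same_cens L0 \<equiv> {\<omega>. cens (snd \<omega>) = cens L0}"

abbreviation agreeing_with :: "ledger \<Rightarrow> dmodel \<Rightarrow> (dmodel \<times> ledger) set" where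
  "agreeing_with L0 \<mu>h \<equiv> {\<omega>. cens (snd \<omega>) = cens L0 \<and> agrees_on (explored 1 L0) (fst \<omega>) \<mu>h}"

lemma set_rewards_set_rewards: "set_rewards f (set_rewards g L) = set_rewards (\<lambda>t r. f t (g t r)) L"
  by (induction L) (auto simp: set_rewards_def)

lemma set_rewards_eq_iff:
  "set_rewards f L = set_rewards g L \<longleftrightarrow>
    (\<forall>e\<in>set L. \<forall>(x, a, r, h)\<in>set (snd e). f (x, a, h) r = g (x, a, h) r)"
  by (induction L) (auto simp: set_rewards_def)

lemma ent_visits_set_rewards:
  "ent_visits (\<pi>, map (\<lambda>(x, a, r, h). (x, a, f (x, a, h) r, h)) tr) = ent_visits (\<pi>, tr)"
  by (force simp: ent_visits_def)

lemma explored_set_rewards[simp]: "explored n (set_rewards f L) = explored n L"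
proof -
  have "length (filter (\<lambda>e. t \<in> ent_visits e) (set_rewards f L))
      = length (filter (\<lambda>e. t \<in> ent_visits e) L)" for t
    by (induction L) (auto simp: set_rewards_def ent_visits_set_rewards split: prod.splits)
  then show ?thesis
    by (simp add: explored_def)
qed

lemma cens_set_rewards[simp]: "cens (set_rewards f L) = cens L"
  unfolding cens_def set_rewards_set_rewards ..

lemma cens_hal[simp]: "cens (hal n L \<mu>) = cens L"
  by (simp add: hal_def)

lemma explored_cens[simp]: "explored n (cens L) = explored n L"
  by (simp add: cens_def)

lemma hal_cens: "hal n (cens L) \<mu> = hal n L \<mu>"
  by (simp add: hal_def cens_def set_rewards_set_rewards)

lemma hal_cong_cens: "cens L = cens L' \<Longrightarrow> hal n L \<mu> = hal n L' \<mu>"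
  by (metis hal_cens)

lemma post_cong_cens: "cens L = cens L' \<Longrightarrow> post n \<epsilon> D L = post n \<epsilon> D L'"
  by (simp add: post_def)

lemma explored_one: "explored 1 L = (\<Union>e\<in>set L. ent_visits e)"
proof -
  have "1 \<le> length (filter P L) \<longleftrightarrow> (\<exists>e\<in>set L. P e)" for P :: "entry \<Rightarrow> bool"
    by (simp add: One_nat_def Suc_le_eq filter_empty_conv)
  then show ?thesis
    unfolding explored_def by auto
qed

lemma explored_cong_cens: "cens L = cens L' \<Longrightarrow> explored n L = explored n L'"
  by (metis explored_cens)

lemma hal_eq_iff:
  "hal 1 L \<mu> = hal 1 L' \<mu>' \<longleftrightarrow> cens L = cens L' \<and> agrees_on (explored 1 L) \<mu> \<mu>'"
proof -
  have "hal 1 L \<mu> = hal 1 L \<mu>' \<longleftrightarrow> agrees_on (explored 1 L) \<mu> \<mu>'"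
    unfolding hal_def set_rewards_eq_iff agrees_on_def explored_one
    by (force simp: ent_visits_def)
  then show ?thesis
    by (metis cens_hal hal_cong_cens)
qed

lemma ent_visits_raw_traj: "ent_visits (\<pi>, raw_traj H \<mu> \<pi>) = visits H \<mu> \<pi>"
  by (auto simp: ent_visits_def raw_traj_def visits_def image_iff)

lemma explored_ledger_of: "explored 1 (ledger_of H \<mu> pols) = (\<Union>\<pi>\<in>set pols. visits H \<mu> \<pi>)"
  unfolding explored_one by (auto simp: ledger_of_def ent_visits_raw_traj)

lemma hon_ledger_of: "hon n (ledger_of H \<mu> pols) = hal n (ledger_of H \<mu> pols) \<mu>"
  unfolding hon_def hal_def set_rewards_eq_iff
  by (auto simp: ledger_of_def raw_traj_def rew3_def)

lemma cens_ledger_of: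
  "cens (ledger_of H \<mu> pols)
    = map (\<lambda>\<pi>. (\<pi>, map (\<lambda>h. (st \<mu> \<pi> h, \<pi> (st \<mu> \<pi> h) h, None, h)) [0..<H])) pols"
  by (simp add: cens_def set_rewards_def ledger_of_def raw_traj_def)

lemma cens_ledger_of_eq_iff:
  "cens (ledger_of H \<mu> pols) = cens (ledger_of H \<mu>' pols') \<longleftrightarrow>
    pols = pols' \<and> (\<forall>\<pi>\<in>set pols. \<forall>h<H. st \<mu> \<pi> h = st \<mu>' \<pi> h)"
proof
  assume eq: "cens (ledger_of H \<mu> pols) = cens (ledger_of H \<mu>' pols')"
  have "pols = pols'"
    using arg_cong[OF eq, of "map fst"] by (simp add: cens_ledger_of comp_def)
  with eq show "pols = pols' \<and> (\<forall>\<pi>\<in>set pols. \<forall>h<H. st \<mu> \<pi> h = st \<mu>' \<pi> h)"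
    by (auto simp: cens_ledger_of map_eq_conv)
qed (auto simp: cens_ledger_of intro!: map_cong)

lemma hon_ledger_of_eq_hal_iff:
  "hon 1 (ledger_of H \<mu> pols) = hal 1 L0 \<mu>h \<longleftrightarrow>
    cens (ledger_of H \<mu> pols) = cens L0 \<and> agrees_on (explored 1 L0) \<mu> \<mu>h"
proof -
  have "hon 1 (ledger_of H \<mu> pols) = hal 1 L0 \<mu>h \<longleftrightarrow>
      cens (ledger_of H \<mu> pols) = cens L0 \<and> agrees_on (explored 1 (ledger_of H \<mu> pols)) \<mu> \<mu>h"
    by (simp only: hon_ledger_of hal_eq_iff)
  then show ?thesis
    using explored_cong_cens[of "ledger_of H \<mu> pols" L0 1] by auto
qed

lemma prob_post_hal:
  "measure_pmf.prob (post 1 \<epsilon> D L) {\<mu>. hal 1 L \<mu> = hal 1 L0 \<mu>h}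
    = (if cens L = cens L0 then measure_pmf.prob (post 1 \<epsilon> D L0) {\<mu>. hal 1 L0 \<mu> = hal 1 L0 \<mu>h} else 0)"
proof (cases "cens L = cens L0")
  case True
  then show ?thesis
    by (simp add: post_cong_cens[OF True] hal_cong_cens[OF True])
next
  case False
  then have "{\<mu>. hal 1 L \<mu> = hal 1 L0 \<mu>h} = {}"
    by (simp only: hal_eq_iff) blast
  with False show ?thesis
    by simp
qed

text \<open>The posterior conditions on the punish event, and a hallucination reproduces the signal
  exactly when it agrees with \<mu>h on the explored triples.\<close>
lemma prob_post_hal_le:
  fixes L0 :: ledger and \<epsilon> :: real
  defines "Pun \<equiv> {\<omega>. cens (snd \<omega>) = cens L0 \<and> pun 1 \<epsilon> (fst \<omega>) (snd \<omega>)}"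
  shows "measure_pmf.prob (post 1 \<epsilon> D L0) {\<mu>. hal 1 L0 \<mu> = hal 1 L0 \<mu>h} * measure_pmf.prob D Pun
    \<le> measure_pmf.prob D (agreeing_with L0 \<mu>h)"
proof (cases "set_pmf D \<inter> Pun = {}")
  case True
  then show ?thesis
    by (simp add: measure_pmf_zero_iff[THEN iffD2])
next
  case False
  then obtain \<omega> where "\<omega> \<in> set_pmf D" "\<omega> \<in> Pun"
    by blast
  then have pos: "measure_pmf.prob D Pun > 0"
    by (rule measure_pmf_posI)
  have "Pun = {(\<mu>, L). cens L = cens L0 \<and> pun 1 \<epsilon> \<mu> L}"
    by (auto simp: Pun_def)
  with False have "post 1 \<epsilon> D L0 = map_pmf fst (cond_pmf D Pun)"
    by (simp add: post_def)
  then have "measure_pmf.prob (post 1 \<epsilon> D L0) {\<mu>. hal 1 L0 \<mu> = hal 1 L0 \<mu>h}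
      = measure_pmf.prob D (Pun \<inter> fst -` {\<mu>. hal 1 L0 \<mu> = hal 1 L0 \<mu>h}) / measure_pmf.prob D Pun"
    by (simp add: measure_cond_pmf[OF False])
  then have "measure_pmf.prob (post 1 \<epsilon> D L0) {\<mu>. hal 1 L0 \<mu> = hal 1 L0 \<mu>h} * measure_pmf.prob D Pun
      = measure_pmf.prob D (Pun \<inter> fst -` {\<mu>. hal 1 L0 \<mu> = hal 1 L0 \<mu>h})"
    using pos by simp
  also have "\<dots> \<le> measure_pmf.prob D (agreeing_with L0 \<mu>h)"
    unfolding Pun_def hal_eq_iff by (intro measure_pmf.finite_measure_mono) auto
  finally show ?thesis .
qed

lemma ledger_of_snoc: "ledger_of H \<mu> (pols @ [\<pi>]) = ledger_of H \<mu> pols @ [(\<pi>, raw_traj H \<mu> \<pi>)]"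
  by (simp add: ledger_of_def)

lemma ent_visits_ledger_of_nth:
  "j < length pols \<Longrightarrow> ent_visits (ledger_of H \<mu> pols ! j) = visits H \<mu> (pols ! j)"
  by (simp add: ledger_of_def ent_visits_raw_traj)

lemma UN_ent_visits_ledger_of:
  "(\<Union>j<length pols. ent_visits (ledger_of H \<mu> pols ! j)) = explored 1 (ledger_of H \<mu> pols)"
  by (auto simp: explored_ledger_of ent_visits_ledger_of_nth in_set_conv_nth) (use nth_mem in blast)

section \<open>Trajectories of deterministic models\<close>

lemma policy_action_less: "\<pi> \<in> policies S A H \<Longrightarrow> x < S \<Longrightarrow> h < H \<Longrightarrow> \<pi> x h < A"
  by (simp add: policies_def)

lemma st_less:
  assumes "valid_model S A H \<mu>" "\<pi> \<in> policies S A H" "h \<le> H"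
  shows "st \<mu> \<pi> h < S"
  using assms(3)
proof (induction h)
  case 0
  then show ?case
    using assms(1) by (simp add: valid_model_def)
next
  case (Suc h)
  then have "st \<mu> \<pi> h < S" "h < H"
    by auto
  then show ?case
    using assms(1) policy_action_less[OF assms(2)] by (simp add: valid_model_def)
qed

lemma visits_subset_triples:
  assumes "valid_model S A H \<mu>" "\<pi> \<in> policies S A H"
  shows "visits H \<mu> \<pi> \<subseteq> triples S A H"
  using st_less[OF assms] policy_action_less[OF assms(2)] by (auto simp: visits_def triples_def)

lemma reachable_subset_triples:
  assumes "valid_model S A H \<mu>"
  shows "reachable S A H \<mu> \<subseteq> triples S A H"
  unfolding reachable_def using visits_subset_triples[OF assms] by blast

lemma st_cong_dyn:
  assumes "valid_model S A H \<mu>" "dyn S A H \<mu> = dyn S A H \<mu>'" "\<pi> \<in> policies S A H" "h \<le> H"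
  shows "st \<mu> \<pi> h = st \<mu>' \<pi> h"
  using assms(4)
proof (induction h)
  case 0
  then show ?case
    using assms(2) by (simp add: dyn_def)
next
  case (Suc h)
  have trans_eq: "trans \<mu> x a h = trans \<mu>' x a h" if "x < S" "a < A" "h < H" for x a h
    using fun_cong[OF fun_cong[OF fun_cong[OF arg_cong[OF assms(2), of snd]]], of x a h] that
    by (simp add: dyn_def)
  have "h < H"
    using Suc.prems by simp
  then have "st \<mu> \<pi> h < S" "\<pi> (st \<mu> \<pi> h) h < A"
    using st_less[OF assms(1,3), of h] policy_action_less[OF assms(3)] by auto
  moreover have "st \<mu> \<pi> h = st \<mu>' \<pi> h"
    using Suc by simp
  ultimately show ?case
    using trans_eq \<open>h < H\<close> by simp
qed

lemma cens_ledger_of_cong_dyn: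
  assumes "valid_model S A H \<mu>" "dyn S A H \<mu> = dyn S A H \<mu>'" "set pols \<subseteq> policies S A H"
  shows "cens (ledger_of H \<mu> pols) = cens (ledger_of H \<mu>' pols)"
  using st_cong_dyn[OF assms(1,2)] assms(3) by (auto simp: cens_ledger_of_eq_iff)

text \<open>Models producing the same trajectories for the ledger policies share every transition
  that these policies use.\<close>
lemma st_eq_along_visited:
  assumes same: "\<And>\<pi>' h. \<pi>' \<in> set pols \<Longrightarrow> h < H \<Longrightarrow> st \<mu> \<pi>' h = st \<mu>0 \<pi>' h"
    and "pols \<noteq> []" and "h < H"
    and visited: "\<And>h'. h' < h \<Longrightarrow> (st \<mu>0 \<pi> h', \<pi> (st \<mu>0 \<pi> h') h', h') \<in> (\<Union>\<pi>'\<in>set pols. visits H \<mu>0 \<pi>')"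
  shows "st \<mu> \<pi> h = st \<mu>0 \<pi> h"
  using assms(3) visited
proof (induction h)
  case 0
  obtain \<pi>' where "\<pi>' \<in> set pols"
    using \<open>pols \<noteq> []\<close> by (cases pols) auto
  then show ?case
    using same[of \<pi>' 0] 0 by simp
next
  case (Suc h)
  define x a where "x = st \<mu>0 \<pi> h" and "a = \<pi> x h"
  have "(x, a, h) \<in> (\<Union>\<pi>'\<in>set pols. visits H \<mu>0 \<pi>')"
    using Suc.prems(2)[of h] by (simp add: x_def a_def)
  then obtain \<pi>' where \<pi>': "\<pi>' \<in> set pols" "st \<mu>0 \<pi>' h = x" "\<pi>' x h = a"
    by (auto simp: visits_def)
  have "st \<mu> \<pi>' h = x"
    using same[OF \<pi>'(1), of h] Suc.prems(1) \<pi>'(2) by simp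
  moreover have "st \<mu> \<pi>' (Suc h) = st \<mu>0 \<pi>' (Suc h)"
    using same[OF \<pi>'(1) Suc.prems(1)] .
  ultimately have "trans \<mu> x a h = trans \<mu>0 x a h"
    using \<pi>'(2,3) by simp
  moreover have "st \<mu> \<pi> h = x"
    using Suc by (simp add: x_def)
  ultimately show ?case
    by (simp add: x_def a_def)
qed

lemma first_exit:
  assumes "\<not> reachable S A H \<mu> \<subseteq> E"
  obtains \<pi> h where "\<pi> \<in> policies S A H" "h < H" "(st \<mu> \<pi> h, \<pi> (st \<mu> \<pi> h) h, h) \<notin> E"
    "\<And>h'. h' < h \<Longrightarrow> (st \<mu> \<pi> h', \<pi> (st \<mu> \<pi> h') h', h') \<in> E"
proof -
  obtain \<pi> where \<pi>: "\<pi> \<in> policies S A H" "\<not> visits H \<mu> \<pi> \<subseteq> E"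
    using assms unfolding reachable_def by blast
  then obtain t where "t \<in> visits H \<mu> \<pi>" "t \<notin> E"
    by blast
  then obtain h where h: "h < H" "(st \<mu> \<pi> h, \<pi> (st \<mu> \<pi> h) h, h) \<notin> E"
    unfolding visits_def by blast
  let ?exits = "\<lambda>h. h < H \<and> (st \<mu> \<pi> h, \<pi> (st \<mu> \<pi> h) h, h) \<notin> E"
  have "?exits (LEAST h. ?exits h)"
    using h by (intro LeastI[of ?exits h]) simp
  moreover have "(st \<mu> \<pi> h', \<pi> (st \<mu> \<pi> h') h', h') \<in> E" if "h' < (LEAST h. ?exits h)" for h'
    using not_less_Least[OF that] that calculation by (meson order.strict_trans)
  ultimately show ?thesis
    using that[OF \<pi>(1)] by blast
qed

lemma reward_bounds:
  assumes "valid_model S A H \<mu>" "\<pi> \<in> policies S A H" "h < H"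
  shows "0 \<le> rew \<mu> (st \<mu> \<pi> h) (\<pi> (st \<mu> \<pi> h) h) h" "rew \<mu> (st \<mu> \<pi> h) (\<pi> (st \<mu> \<pi> h) h) h \<le> 1"
  using st_less[OF assms(1,2), of h] policy_action_less[OF assms(2), of "st \<mu> \<pi> h" h] assms
  by (auto simp: valid_model_def)

lemma episode_value_bounds:
  assumes "valid_model S A H \<mu>" "\<pi> \<in> policies S A H"
  shows "0 \<le> episode_value H \<pi> \<mu>" "episode_value H \<pi> \<mu> \<le> real H"
proof -
  show "0 \<le> episode_value H \<pi> \<mu>"
    unfolding episode_value_def using reward_bounds[OF assms] by (intro sum_nonneg) auto
  have "episode_value H \<pi> \<mu> \<le> (\<Sum>h<H. 1)"
    unfolding episode_value_def using reward_bounds(2)[OF assms] by (intro sum_mono) auto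
  then show "episode_value H \<pi> \<mu> \<le> real H"
    by simp
qed

lemma reward_le_episode_value:
  assumes "valid_model S A H \<mu>" "\<pi> \<in> policies S A H" "h < H"
  shows "rew3 \<mu> (st \<mu> \<pi> h, \<pi> (st \<mu> \<pi> h) h, h) \<le> episode_value H \<pi> \<mu>"
  unfolding episode_value_def rew3_def
  using member_le_sum[of h "{..<H}" "\<lambda>h. rew \<mu> (st \<mu> \<pi> h) (\<pi> (st \<mu> \<pi> h) h) h"]
    reward_bounds[OF assms(1,2)] assms(3)
  by auto

lemma episode_value_le_if_rewards_le:
  assumes "\<And>h. h < H \<Longrightarrow> rew3 \<mu> (st \<mu> \<pi> h, \<pi> (st \<mu> \<pi> h) h, h) \<le> e"
  shows "episode_value H \<pi> \<mu> \<le> real H * e"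
proof -
  have "episode_value H \<pi> \<mu> \<le> (\<Sum>h<H. e)"
    unfolding episode_value_def using assms by (intro sum_mono) (auto simp: rew3_def)
  then show ?thesis
    by simp
qed

lemma finite_policies: "finite (policies S A H)"
proof (rule finite_subset)
  let ?G = "(\<lambda>g x h. if x < S \<and> h < H then g (x, h) else 0) ` ({..<S} \<times> {..<H} \<rightarrow>\<^sub>E {..<A})"
  show "finite ?G"
    by (intro finite_imageI finite_PiE) auto
  show "policies S A H \<subseteq> ?G"
  proof
    fix \<pi> assume "\<pi> \<in> policies S A H"
    then have A: "\<forall>x h. x < S \<and> h < H \<longrightarrow> \<pi> x h < A" and zero: "\<forall>x h. \<not> (x < S \<and> h < H) \<longrightarrow> \<pi> x h = 0"
      unfolding policies_def by blast+
    define g where "g = (\<lambda>(x, h)\<in>{..<S} \<times> {..<H}. \<pi> x h)"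
    have "g \<in> {..<S} \<times> {..<H} \<rightarrow>\<^sub>E {..<A}"
      using A unfolding g_def by (simp add: PiE_iff)
    moreover have "\<pi> = (\<lambda>x h. if x < S \<and> h < H then g (x, h) else 0)"
      using zero unfolding g_def by (intro ext) auto
    ultimately show "\<pi> \<in> ?G"
      by blast
  qed
qed

lemma agent_maximizes:
  assumes "0 < A" and tb: "\<forall>M. M \<noteq> {} \<longrightarrow> tb M \<in> M"
  shows "agent S A H tb J \<sigma> \<in> policies S A H"
    "\<And>\<pi>'. \<pi>' \<in> policies S A H \<Longrightarrow> cond_exp_value H J \<sigma> \<pi>' \<le> cond_exp_value H J \<sigma> (agent S A H tb J \<sigma>)"
proof -
  let ?f = "cond_exp_value H J \<sigma>" and ?P = "policies S A H"
  have "(\<lambda>x h. 0) \<in> ?P"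
    using \<open>0 < A\<close> by (simp add: policies_def)
  then have "finite (?f ` ?P)" "?f ` ?P \<noteq> {}"
    using finite_policies by auto
  then have "Max (?f ` ?P) \<in> ?f ` ?P"
    by (rule Max_in)
  then obtain \<pi> where "\<pi> \<in> ?P" "?f \<pi> = Max (?f ` ?P)"
    by (rule imageE) simp
  then have "\<pi> \<in> {\<pi> \<in> ?P. \<forall>\<pi>'\<in>?P. ?f \<pi>' \<le> ?f \<pi>}"
    using \<open>finite (?f ` ?P)\<close> by simp
  then have "{\<pi> \<in> ?P. \<forall>\<pi>'\<in>?P. ?f \<pi>' \<le> ?f \<pi>} \<noteq> {}"
    by blast
  then have "agent S A H tb J \<sigma> \<in> {\<pi> \<in> ?P. \<forall>\<pi>'\<in>?P. ?f \<pi>' \<le> ?f \<pi>}"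
    unfolding agent_def by (rule tb[rule_format])
  then show "agent S A H tb J \<sigma> \<in> ?P" "\<And>\<pi>'. \<pi>' \<in> ?P \<Longrightarrow> ?f \<pi>' \<le> ?f (agent S A H tb J \<sigma>)"
    by auto
qed

lemma exit_reward_le_episode_value:
  assumes "valid_model S A H \<mu>" "\<pi> \<in> policies S A H"
    and same: "\<And>\<pi>' h. \<pi>' \<in> set pols \<Longrightarrow> h < H \<Longrightarrow> st \<mu> \<pi>' h = st \<mu>0 \<pi>' h"
    and "pols \<noteq> []" "h < H"
    and visited: "\<And>h'. h' < h \<Longrightarrow> (st \<mu>0 \<pi> h', \<pi> (st \<mu>0 \<pi> h') h', h') \<in> (\<Union>\<pi>'\<in>set pols. visits H \<mu>0 \<pi>')"
  shows "rew3 \<mu> (st \<mu>0 \<pi> h, \<pi> (st \<mu>0 \<pi> h) h, h) \<le> episode_value H \<pi> \<mu>"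
  using reward_le_episode_value[OF assms(1,2,5)] st_eq_along_visited[OF same assms(4,5) visited]
  by simp

lemma episode_value_le_if_visited:
  assumes same: "\<And>\<pi>' h. \<pi>' \<in> set pols \<Longrightarrow> h < H \<Longrightarrow> st \<mu> \<pi>' h = st \<mu>0 \<pi>' h"
    and "pols \<noteq> []"
    and stays: "visits H \<mu>0 \<pi> \<subseteq> (\<Union>\<pi>'\<in>set pols. visits H \<mu>0 \<pi>')"
    and small: "\<And>t. t \<in> (\<Union>\<pi>'\<in>set pols. visits H \<mu>0 \<pi>') \<Longrightarrow> rew3 \<mu> t \<le> e"
  shows "episode_value H \<pi> \<mu> \<le> real H * e"
proof (rule episode_value_le_if_rewards_le)
  have visited: "(st \<mu>0 \<pi> h, \<pi> (st \<mu>0 \<pi> h) h, h) \<in> (\<Union>\<pi>'\<in>set pols. visits H \<mu>0 \<pi>')" if "h < H" for h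
  proof -
    have "(st \<mu>0 \<pi> h, \<pi> (st \<mu>0 \<pi> h) h, h) \<in> visits H \<mu>0 \<pi>"
      using that by (auto simp: visits_def)
    then show ?thesis
      using stays by blast
  qed
  fix h assume "h < H"
  then have "st \<mu> \<pi> h = st \<mu>0 \<pi> h"
    using visited by (intro st_eq_along_visited[OF same \<open>pols \<noteq> []\<close>]) auto
  then show "rew3 \<mu> (st \<mu> \<pi> h, \<pi> (st \<mu> \<pi> h) h, h) \<le> e"
    using small[OF visited[OF \<open>h < H\<close>]] by simp
qed

section \<open>The phase process\<close>

definition value_on :: "nat \<Rightarrow> (dmodel \<times> ledger) pmf \<Rightarrow> (dmodel \<times> ledger) set \<Rightarrow> policy \<Rightarrow> real" where
  "value_on H D X \<pi> = measure_pmf.expectation D (\<lambda>\<omega>. indicator X \<omega> * episode_value H \<pi> (fst \<omega>))"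

lemma cond_exp_value_eq_value_on:
  assumes "(\<mu>, \<sigma>) \<in> set_pmf J"
  shows "cond_exp_value H J \<sigma> \<pi> = value_on H J {\<omega>. snd \<omega> = \<sigma>} \<pi> / measure_pmf.prob J {\<omega>. snd \<omega> = \<sigma>}"
  unfolding cond_exp_value_def value_on_def using assms by (intro integral_cond_pmf) auto

lemma value_on_agent_ge:
  assumes "0 < A" "\<forall>M. M \<noteq> {} \<longrightarrow> tb M \<in> M" and "(\<mu>, \<sigma>) \<in> set_pmf J" and "\<pi>' \<in> policies S A H"
  shows "value_on H J {\<omega>. snd \<omega> = \<sigma>} \<pi>' \<le> value_on H J {\<omega>. snd \<omega> = \<sigma>} (agent S A H tb J \<sigma>)"
proof -
  have "measure_pmf.prob J {\<omega>. snd \<omega> = \<sigma>} > 0"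
    using measure_pmf_posI[OF assms(3)] by simp
  then show ?thesis
    using agent_maximizes(2)[OF assms(1,2,4), of J \<sigma>]
    by (simp add: cond_exp_value_eq_value_on[OF assms(3)] divide_le_cancel)
qed

lemma expectation_sigJ:
  fixes v :: "dmodel \<Rightarrow> real"
  assumes "0 < N" and v: "\<And>\<mu> L. (\<mu>, L) \<in> set_pmf D \<Longrightarrow> \<bar>v \<mu>\<bar> \<le> B"
  shows "measure_pmf.expectation (sigJ N n \<epsilon> D) (\<lambda>\<omega>. indicator {\<omega>. snd \<omega> = \<sigma>} \<omega> * v (fst \<omega>))
    = measure_pmf.expectation D (\<lambda>(\<mu>, L). v \<mu> * measure_pmf.prob (post n \<epsilon> D L) {x. hal n L x = \<sigma>} / real N
        + (1 - 1 / real N) * (if hon n L = \<sigma> then v \<mu> else 0))"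
proof -
  define K where "K \<mu> L b = (if b then map_pmf (\<lambda>\<mu>h. (\<mu>, hal n L \<mu>h)) (post n \<epsilon> D L)
    else return_pmf (\<mu>, hon n L))" for \<mu> :: dmodel and L :: ledger and b :: bool
  define f where "f \<omega> = indicator {\<omega>. snd \<omega> = \<sigma>} \<omega> * v (fst \<omega>)" for \<omega> :: "dmodel \<times> ledger"
  have f: "\<bar>f \<omega>\<bar> \<le> B" if "(fst \<omega>, L) \<in> set_pmf D" for \<omega> L
    using v[OF that] by (auto simp: f_def indicator_def)
  have "measure_pmf.expectation (sigJ N n \<epsilon> D) f
     = measure_pmf.expectation D (\<lambda>\<omega>. measure_pmf.expectation
         ((\<lambda>(\<mu>, L). bind_pmf (bernoulli_pmf (1 / real N)) (K \<mu> L)) \<omega>) f)"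
    unfolding sigJ_def K_def[symmetric]
    by (rule integral_bind_pmf_bounded[where B=B]) (auto simp: K_def split: if_splits intro: f)
  also have "\<dots> = measure_pmf.expectation D (\<lambda>(\<mu>, L). v \<mu> * measure_pmf.prob (post n \<epsilon> D L) {x. hal n L x = \<sigma>} / real N
        + (1 - 1 / real N) * (if hon n L = \<sigma> then v \<mu> else 0))"
  proof (intro integral_cong_AE AE_pmfI)
    fix \<omega> assume "\<omega> \<in> set_pmf D"
    obtain \<mu> L where \<omega>: "\<omega> = (\<mu>, L)"
      by (cases \<omega>)
    with \<open>\<omega> \<in> set_pmf D\<close> have "measure_pmf.expectation (bind_pmf (bernoulli_pmf (1 / real N)) (K \<mu> L)) f
        = measure_pmf.expectation (bernoulli_pmf (1 / real N)) (\<lambda>b. measure_pmf.expectation (K \<mu> L b) f)"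
      by (intro integral_bind_pmf_bounded[where B=B]) (auto simp: K_def split: if_splits intro: f)
    also have "\<dots> = measure_pmf.expectation (K \<mu> L True) f / real N + measure_pmf.expectation (K \<mu> L False) f * (1 - 1 / real N)"
      using \<open>0 < N\<close> by simp
    also have "measure_pmf.expectation (K \<mu> L True) f
        = measure_pmf.expectation (post n \<epsilon> D L) (\<lambda>x. v \<mu> * indicator {x. hal n L x = \<sigma>} x)"
      by (simp add: K_def f_def indicator_def mult.commute)
    also have "\<dots> = v \<mu> * measure_pmf.prob (post n \<epsilon> D L) {x. hal n L x = \<sigma>}"
      by simp
    also have "measure_pmf.expectation (K \<mu> L False) f = (if hon n L = \<sigma> then v \<mu> else 0)"
      by (simp add: K_def f_def)
    finally show "measure_pmf.expectation ((\<lambda>(\<mu>, L). bind_pmf (bernoulli_pmf (1 / real N)) (K \<mu> L)) \<omega>) f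
        = (\<lambda>(\<mu>, L). v \<mu> * measure_pmf.prob (post n \<epsilon> D L) {x. hal n L x = \<sigma>} / real N
            + (1 - 1 / real N) * (if hon n L = \<sigma> then v \<mu> else 0)) \<omega>"
      by (simp add: \<omega> algebra_simps)
  qed auto
  finally show ?thesis
    unfolding f_def .
qed

locale hidden_hallucination =
  fixes S A H N :: nat and \<epsilon> :: real and tb :: "policy set \<Rightarrow> policy" and p :: "dmodel pmf"
  assumes pos: "0 < S" "0 < A" "0 < H"
    and valid: "\<And>\<mu>. \<mu> \<in> set_pmf p \<Longrightarrow> valid_model S A H \<mu>"
    and indep: "reward_indep S A H p"
    and tie_break: "\<forall>M. M \<noteq> {} \<longrightarrow> tb M \<in> M"
begin

abbreviation Dl :: "nat \<Rightarrow> (dmodel \<times> ledger) pmf" where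
  "Dl l \<equiv> hh_dist S A H N 1 \<epsilon> tb p l"

text \<open>The ledger of phase l is the trajectory record, in the true model, of policies drawn from a
  kernel that sees the true model only through its dynamics.\<close>
definition policy_kernel :: "nat \<Rightarrow> (dmodel \<Rightarrow> policy list pmf) \<Rightarrow> bool" where
  "policy_kernel l Q \<longleftrightarrow>
     (\<forall>\<mu>\<in>set_pmf p. \<forall>pols\<in>set_pmf (Q \<mu>). set pols \<subseteq> policies S A H \<and> length pols = l)
     \<and> (\<forall>\<mu>\<in>set_pmf p. \<forall>\<mu>'\<in>set_pmf p. dyn S A H \<mu> = dyn S A H \<mu>' \<longrightarrow> Q \<mu> = Q \<mu>')
     \<and> Dl l = bind_pmf p (\<lambda>\<mu>. map_pmf (\<lambda>pols. (\<mu>, ledger_of H \<mu> pols)) (Q \<mu>))"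

lemma policy_kernelD:
  assumes "policy_kernel l Q"
  shows "\<And>\<mu> pols. \<mu> \<in> set_pmf p \<Longrightarrow> pols \<in> set_pmf (Q \<mu>) \<Longrightarrow> set pols \<subseteq> policies S A H \<and> length pols = l"
    and "\<And>\<mu> \<mu>'. \<mu> \<in> set_pmf p \<Longrightarrow> \<mu>' \<in> set_pmf p \<Longrightarrow> dyn S A H \<mu> = dyn S A H \<mu>' \<Longrightarrow> Q \<mu> = Q \<mu>'"
    and "Dl l = bind_pmf p (\<lambda>\<mu>. map_pmf (\<lambda>pols. (\<mu>, ledger_of H \<mu> pols)) (Q \<mu>))"
proof -
  note kernel = assms[unfolded policy_kernel_def]
  show "Dl l = bind_pmf p (\<lambda>\<mu>. map_pmf (\<lambda>pols. (\<mu>, ledger_of H \<mu> pols)) (Q \<mu>))"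
    using kernel by (elim conjE)
  show "set pols \<subseteq> policies S A H \<and> length pols = l" if "\<mu> \<in> set_pmf p" "pols \<in> set_pmf (Q \<mu>)" for \<mu> pols
    using kernel that by (elim conjE) blast
  show "Q \<mu> = Q \<mu>'" if "\<mu> \<in> set_pmf p" "\<mu>' \<in> set_pmf p" "dyn S A H \<mu> = dyn S A H \<mu>'" for \<mu> \<mu>'
    using kernel that by (elim conjE) blast
qed

definition next_kernel :: "nat \<Rightarrow> (dmodel \<Rightarrow> policy list pmf) \<Rightarrow> dmodel \<Rightarrow> policy list pmf" where
  "next_kernel l Q \<mu> = bind_pmf (Q \<mu>) (\<lambda>pols. map_pmf
     (\<lambda>\<mu>h. pols @ [agent S A H tb (sigJ N 1 \<epsilon> (Dl l)) (hal 1 (ledger_of H \<mu> pols) \<mu>h)])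
     (post 1 \<epsilon> (Dl l) (ledger_of H \<mu> pols)))"

lemma policy_kernelI:
  assumes "\<And>\<mu> pols. \<mu> \<in> set_pmf p \<Longrightarrow> pols \<in> set_pmf (Q \<mu>) \<Longrightarrow> set pols \<subseteq> policies S A H \<and> length pols = l"
    and "\<And>\<mu> \<mu>'. \<mu> \<in> set_pmf p \<Longrightarrow> \<mu>' \<in> set_pmf p \<Longrightarrow> dyn S A H \<mu> = dyn S A H \<mu>' \<Longrightarrow> Q \<mu> = Q \<mu>'"
    and "Dl l = bind_pmf p (\<lambda>\<mu>. map_pmf (\<lambda>pols. (\<mu>, ledger_of H \<mu> pols)) (Q \<mu>))"
  shows "policy_kernel l Q"
  unfolding policy_kernel_def
proof (intro conjI)
  show "\<forall>\<mu>\<in>set_pmf p. \<forall>pols\<in>set_pmf (Q \<mu>). set pols \<subseteq> policies S A H \<and> length pols = l"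
    using assms(1) by blast
  show "\<forall>\<mu>\<in>set_pmf p. \<forall>\<mu>'\<in>set_pmf p. dyn S A H \<mu> = dyn S A H \<mu>' \<longrightarrow> Q \<mu> = Q \<mu>'"
    using assms(2) by blast
qed (rule assms(3))

lemma phase_law_Suc:
  assumes "policy_kernel l Q"
  shows "Dl (Suc l) = bind_pmf p (\<lambda>\<mu>. map_pmf (\<lambda>pols. (\<mu>, ledger_of H \<mu> pols)) (next_kernel l Q \<mu>))"
proof -
  define step where "step = hh_step S A H N 1 \<epsilon> tb (Dl l)"
  have "Dl (Suc l) = bind_pmf (Dl l) step"
    by (simp add: step_def)
  also have "\<dots> = bind_pmf (bind_pmf p (\<lambda>\<mu>. map_pmf (\<lambda>pols. (\<mu>, ledger_of H \<mu> pols)) (Q \<mu>))) step"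
    by (simp only: policy_kernelD(3)[OF assms])
  also have "\<dots> = bind_pmf p (\<lambda>\<mu>. map_pmf (\<lambda>pols. (\<mu>, ledger_of H \<mu> pols)) (next_kernel l Q \<mu>))"
    by (simp add: bind_assoc_pmf bind_map_pmf map_bind_pmf next_kernel_def step_def hh_step_def Let_def
        map_pmf_comp ledger_of_snoc)
  finally show ?thesis .
qed

lemma policy_kernel_Suc:
  assumes Q: "policy_kernel l Q"
  shows "policy_kernel (Suc l) (next_kernel l Q)"
proof (rule policy_kernelI)
  fix \<mu> pols assume \<mu>: "\<mu> \<in> set_pmf p" and "pols \<in> set_pmf (next_kernel l Q \<mu>)"
  then obtain pols0 \<mu>h where "pols0 \<in> set_pmf (Q \<mu>)"
    and "pols = pols0 @ [agent S A H tb (sigJ N 1 \<epsilon> (Dl l)) (hal 1 (ledger_of H \<mu> pols0) \<mu>h)]"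
    by (auto simp: next_kernel_def)
  then show "set pols \<subseteq> policies S A H \<and> length pols = Suc l"
    using policy_kernelD(1)[OF Q \<mu>] agent_maximizes(1)[OF pos(2) tie_break] by auto
next
  fix \<mu> \<mu>' assume \<mu>: "\<mu> \<in> set_pmf p" "\<mu>' \<in> set_pmf p" and dyn: "dyn S A H \<mu> = dyn S A H \<mu>'"
  have "cens (ledger_of H \<mu> pols) = cens (ledger_of H \<mu>' pols)" if "pols \<in> set_pmf (Q \<mu>)" for pols
    using policy_kernelD(1)[OF Q \<mu>(1) that] by (intro cens_ledger_of_cong_dyn[OF valid[OF \<mu>(1)] dyn]) simp
  then have "hal 1 (ledger_of H \<mu> pols) = hal 1 (ledger_of H \<mu>' pols)"
    and "post 1 \<epsilon> (Dl l) (ledger_of H \<mu> pols) = post 1 \<epsilon> (Dl l) (ledger_of H \<mu>' pols)"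
    if "pols \<in> set_pmf (Q \<mu>)" for pols
    using that by (auto intro: hal_cong_cens post_cong_cens)
  then show "next_kernel l Q \<mu> = next_kernel l Q \<mu>'"
    unfolding next_kernel_def policy_kernelD(2)[OF Q \<mu> dyn] by (intro bind_pmf_cong) auto
qed (rule phase_law_Suc[OF Q])

lemma policy_kernel_exists: "\<exists>Q. policy_kernel l Q"
proof (induction l)
  case 0
  show ?case
    by (rule exI[of _ "\<lambda>_. return_pmf []"])
      (simp add: policy_kernel_def map_pmf_def ledger_of_def bind_return_pmf)
next
  case (Suc l)
  then show ?case
    using policy_kernel_Suc by blast
qed

lemma r_min_le_mean: "t \<in> triples S A H \<Longrightarrow> r_min S A H p \<le> measure_pmf.expectation p (\<lambda>\<mu>. rew3 \<mu> t)"
  unfolding r_min_def by (intro Min_le) (auto simp: finite_triples)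

lemma f_min_le_prob: "t \<in> triples S A H \<Longrightarrow> f_min S A H p e \<le> measure_pmf.prob p {\<mu>. rew3 \<mu> t \<le> e}"
  unfolding f_min_def by (intro Min_le) (auto simp: finite_triples)

lemma rew3_bounds: "\<mu> \<in> set_pmf p \<Longrightarrow> t \<in> triples S A H \<Longrightarrow> 0 \<le> rew3 \<mu> t \<and> rew3 \<mu> t \<le> 1"
  using valid by (auto simp: valid_model_def triples_def rew3_def)

lemma mean_reward_le_1: "t \<in> triples S A H \<Longrightarrow> measure_pmf.expectation p (\<lambda>\<mu>. rew3 \<mu> t) \<le> 1"
  using integral_mono_pmf_bounded[of p "\<lambda>\<mu>. rew3 \<mu> t" 1 "\<lambda>_. 1"] rew3_bounds by auto

lemma origin_in_triples: "(0, 0, 0) \<in> triples S A H"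
  using pos by (simp add: triples_def)

lemma r_min_le_1: "r_min S A H p \<le> 1"
  using r_min_le_mean[OF origin_in_triples] mean_reward_le_1[OF origin_in_triples] by linarith

lemma f_min_le_1: "f_min S A H p e \<le> 1"
  using f_min_le_prob[OF origin_in_triples, of e] measure_pmf.prob_le_1 by (meson order_trans)

context
  fixes l Q assumes kernel: "policy_kernel l Q"
begin

lemmas phase_law_eq = policy_kernelD(3)[OF kernel]
  and kernel_policies = policy_kernelD(1)[OF kernel]

lemma phase_law_elem:
  assumes "\<omega> \<in> set_pmf (Dl l)"
  obtains \<mu> pols where "\<mu> \<in> set_pmf p" "pols \<in> set_pmf (Q \<mu>)" "\<omega> = (\<mu>, ledger_of H \<mu> pols)"
  using assms by (auto simp: phase_law_eq)

lemma phase_law_memI: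
  "\<mu> \<in> set_pmf p \<Longrightarrow> pols \<in> set_pmf (Q \<mu>) \<Longrightarrow> (\<mu>, ledger_of H \<mu> pols) \<in> set_pmf (Dl l)"
  by (auto simp: phase_law_eq)

lemma episode_value_bounded:
  assumes "\<pi> \<in> policies S A H" "\<omega> \<in> set_pmf (Dl l)"
  shows "\<bar>episode_value H \<pi> (fst \<omega>)\<bar> \<le> real H"
proof -
  obtain \<mu> pols where "\<mu> \<in> set_pmf p" "\<omega> = (\<mu>, ledger_of H \<mu> pols)"
    using assms(2) by (rule phase_law_elem)
  then show ?thesis
    using episode_value_bounds[OF valid assms(1)] by simp
qed

lemma expectation_cens_indicator:
  fixes k :: "dmodel \<Rightarrow> real"
  assumes k: "\<And>\<mu>. \<mu> \<in> set_pmf p \<Longrightarrow> \<bar>k \<mu>\<bar> \<le> B"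
  shows "measure_pmf.expectation (Dl l) (\<lambda>\<omega>. indicator {\<omega>. cens (snd \<omega>) = c} \<omega> * k (fst \<omega>))
    = measure_pmf.expectation p (\<lambda>\<mu>. measure_pmf.prob (Q \<mu>) {pols. cens (ledger_of H \<mu> pols) = c} * k \<mu>)"
proof -
  have "measure_pmf.expectation (Dl l) (\<lambda>\<omega>. indicator {\<omega>. cens (snd \<omega>) = c} \<omega> * k (fst \<omega>))
      = measure_pmf.expectation p (\<lambda>\<mu>. measure_pmf.expectation (Q \<mu>)
          (\<lambda>pols. indicator {pols. cens (ledger_of H \<mu> pols) = c} pols * k \<mu>))"
    unfolding phase_law_eq using k
    by (subst integral_bind_pmf_bounded[where B=B])
      (auto simp: indicator_def intro!: integral_cong_AE, meson abs_ge_zero order_trans)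
  then show ?thesis
    by simp
qed

lemma cens_prob_cong_dyn:
  assumes "\<mu> \<in> set_pmf p" "\<mu>' \<in> set_pmf p" "dyn S A H \<mu> = dyn S A H \<mu>'"
  shows "measure_pmf.prob (Q \<mu>) {pols. cens (ledger_of H \<mu> pols) = c}
    = measure_pmf.prob (Q \<mu>') {pols. cens (ledger_of H \<mu>' pols) = c}"
proof -
  have Q_eq: "Q \<mu> = Q \<mu>'"
    using policy_kernelD(2)[OF kernel assms] .
  have "{pols. cens (ledger_of H \<mu> pols) = c} \<inter> set_pmf (Q \<mu>)
      = {pols. cens (ledger_of H \<mu>' pols) = c} \<inter> set_pmf (Q \<mu>)"
    using cens_ledger_of_cong_dyn[OF valid[OF assms(1)] assms(3)] kernel_policies[OF assms(1)] by auto
  then show ?thesis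
    by (metis Q_eq measure_Int_set_pmf)
qed

text \<open>Given the censored ledger, the rewards of the explored triples and of a fresh triple are
  still independent with their prior marginals, because the ledger depends on the dynamics only.\<close>
lemma expectation_cens_rewards:
  fixes w :: "real \<Rightarrow> real"
  assumes E: "E \<subseteq> triples S A H" and t0: "t0 \<in> triples S A H" "t0 \<notin> E"
    and w: "\<And>x. 0 \<le> x \<Longrightarrow> x \<le> 1 \<Longrightarrow> 0 \<le> w x \<and> w x \<le> 1"
  shows "measure_pmf.expectation (Dl l)
      (\<lambda>\<omega>. indicator {\<omega>. cens (snd \<omega>) = c \<and> (\<forall>t\<in>E. rew3 (fst \<omega>) t \<in> Bs t)} \<omega> * w (rew3 (fst \<omega>) t0))
    = measure_pmf.prob (Dl l) {\<omega>. cens (snd \<omega>) = c} * (\<Prod>t\<in>E. measure_pmf.prob p {\<mu>. rew3 \<mu> t \<in> Bs t})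
        * measure_pmf.expectation p (\<lambda>\<mu>. w (rew3 \<mu> t0))"
proof -
  define g where "g \<mu> = measure_pmf.prob (Q \<mu>) {pols. cens (ledger_of H \<mu> pols) = c}" for \<mu>
  have w_rew: "0 \<le> w (rew3 \<mu> t0) \<and> w (rew3 \<mu> t0) \<le> 1" if "\<mu> \<in> set_pmf p" for \<mu>
    using valid[OF that] t0 w by (auto simp: valid_model_def triples_def rew3_def)
  have prob_cens: "measure_pmf.prob (Dl l) {\<omega>. cens (snd \<omega>) = c} = measure_pmf.expectation p g"
    using expectation_cens_indicator[of "\<lambda>_. 1" 1 c] unfolding g_def by simp
  have "measure_pmf.expectation (Dl l)
      (\<lambda>\<omega>. indicator {\<omega>. cens (snd \<omega>) = c \<and> (\<forall>t\<in>E. rew3 (fst \<omega>) t \<in> Bs t)} \<omega> * w (rew3 (fst \<omega>) t0))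
    = measure_pmf.expectation (Dl l) (\<lambda>\<omega>. indicator {\<omega>. cens (snd \<omega>) = c} \<omega>
        * (indicator {\<mu>. \<forall>t\<in>E. rew3 \<mu> t \<in> Bs t} (fst \<omega>) * w (rew3 (fst \<omega>) t0)))"
    by (intro arg_cong[where f="measure_pmf.expectation (Dl l)"] ext) (simp add: indicator_def)
  also have "\<dots> = measure_pmf.expectation p (\<lambda>\<mu>. g \<mu> * (indicator {\<mu>. \<forall>t\<in>E. rew3 \<mu> t \<in> Bs t} \<mu> * w (rew3 \<mu> t0)))"
    unfolding g_def by (rule expectation_cens_indicator[where B=1]) (use w_rew in \<open>simp add: indicator_def\<close>)
  also have "\<dots> = measure_pmf.expectation p (\<lambda>\<mu>. g \<mu> * indicator {\<mu>. \<forall>t\<in>E. rew3 \<mu> t \<in> Bs t} \<mu> * w (rew3 \<mu> t0))"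
    by (simp add: mult.assoc)
  also have "\<dots> = measure_pmf.expectation p g * (\<Prod>t\<in>E. measure_pmf.prob p {\<mu>. rew3 \<mu> t \<in> Bs t})
      * measure_pmf.expectation p (\<lambda>\<mu>. w (rew3 \<mu> t0))"
  proof (rule reward_indep_expectation[where B=1, OF indep _ _ E t0])
    show "g \<mu> = g \<mu>'" if "\<mu> \<in> set_pmf p" "\<mu>' \<in> set_pmf p" "dyn S A H \<mu> = dyn S A H \<mu>'" for \<mu> \<mu>'
      unfolding g_def using that by (rule cens_prob_cong_dyn)
  qed (simp_all add: g_def w_rew)
  finally show ?thesis
    unfolding prob_cens .
qed

lemma phase_law_fst: "\<omega> \<in> set_pmf (Dl l) \<Longrightarrow> fst \<omega> \<in> set_pmf p"
  by (auto elim: phase_law_elem)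

lemma explored_ledger_subset_triples:
  "\<mu> \<in> set_pmf p \<Longrightarrow> pols \<in> set_pmf (Q \<mu>) \<Longrightarrow> explored 1 (ledger_of H \<mu> pols) \<subseteq> triples S A H"
  using kernel_policies visits_subset_triples[OF valid] by (fastforce simp: explored_ledger_of)

lemma phase_law_same_trajectories:
  assumes "\<omega> \<in> set_pmf (Dl l)" "cens (snd \<omega>) = cens (ledger_of H \<mu>0 pols0)" "\<pi> \<in> set pols0" "h < H"
  shows "st (fst \<omega>) \<pi> h = st \<mu>0 \<pi> h"
proof -
  obtain \<mu> pols where "\<omega> = (\<mu>, ledger_of H \<mu> pols)"
    using assms(1) by (rule phase_law_elem)
  then show ?thesis
    using assms(2-4) by (auto simp: cens_ledger_of_eq_iff)
qed

lemma value_on_signal: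
  fixes L0 :: ledger and \<mu>h :: dmodel
  assumes "0 < N" "\<pi> \<in> policies S A H"
  defines "W \<equiv> measure_pmf.prob (post 1 \<epsilon> (Dl l) L0) {\<mu>. hal 1 L0 \<mu> = hal 1 L0 \<mu>h}"
  shows "value_on H (sigJ N 1 \<epsilon> (Dl l)) {\<omega>. snd \<omega> = hal 1 L0 \<mu>h} \<pi>
    = W / N * value_on H (Dl l) (same_cens L0) \<pi> + (1 - 1 / N) * value_on H (Dl l) (agreeing_with L0 \<mu>h) \<pi>"
proof -
  let ?V = "\<lambda>\<omega>. episode_value H \<pi> (fst \<omega>)"
  let ?C = "same_cens L0" and ?A = "agreeing_with L0 \<mu>h"
  have bounded: "\<bar>?V \<omega>\<bar> \<le> real H" if "\<omega> \<in> set_pmf (Dl l)" for \<omega>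
    using episode_value_bounded[OF assms(2) that] .
  have "value_on H (sigJ N 1 \<epsilon> (Dl l)) {\<omega>. snd \<omega> = hal 1 L0 \<mu>h} \<pi>
      = measure_pmf.expectation (Dl l) (\<lambda>(\<mu>, L). episode_value H \<pi> \<mu>
          * measure_pmf.prob (post 1 \<epsilon> (Dl l) L) {x. hal 1 L x = hal 1 L0 \<mu>h} / real N
          + (1 - 1 / real N) * (if hon 1 L = hal 1 L0 \<mu>h then episode_value H \<pi> \<mu> else 0))"
    unfolding value_on_def
  proof (rule expectation_sigJ[OF \<open>0 < N\<close>])
    fix \<mu> L assume "(\<mu>, L) \<in> set_pmf (Dl l)"
    from bounded[OF this] show "\<bar>episode_value H \<pi> \<mu>\<bar> \<le> real H"
      by simp
  qed
  also have "\<dots> = measure_pmf.expectation (Dl l)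
      (\<lambda>\<omega>. W / N * (indicator ?C \<omega> * ?V \<omega>) + (1 - 1 / N) * (indicator ?A \<omega> * ?V \<omega>))"
  proof (intro integral_cong_AE AE_pmfI)
    fix \<omega> assume "\<omega> \<in> set_pmf (Dl l)"
    then obtain \<mu> pols where \<omega>: "\<omega> = (\<mu>, ledger_of H \<mu> pols)"
      by (rule phase_law_elem)
    have prob: "measure_pmf.prob (post 1 \<epsilon> (Dl l) (ledger_of H \<mu> pols))
        {x. hal 1 (ledger_of H \<mu> pols) x = hal 1 L0 \<mu>h} = (if cens (ledger_of H \<mu> pols) = cens L0 then W else 0)"
      unfolding W_def by (rule prob_post_hal)
    show "(\<lambda>(\<mu>, L). episode_value H \<pi> \<mu>
          * measure_pmf.prob (post 1 \<epsilon> (Dl l) L) {x. hal 1 L x = hal 1 L0 \<mu>h} / real N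
          + (1 - 1 / real N) * (if hon 1 L = hal 1 L0 \<mu>h then episode_value H \<pi> \<mu> else 0)) \<omega>
        = W / N * (indicator ?C \<omega> * ?V \<omega>) + (1 - 1 / N) * (indicator ?A \<omega> * ?V \<omega>)"
      by (simp add: \<omega> prob hon_ledger_of_eq_hal_iff indicator_def)
  qed auto
  also have "\<dots> = W / N * measure_pmf.expectation (Dl l) (\<lambda>\<omega>. indicator ?C \<omega> * ?V \<omega>)
      + (1 - 1 / N) * measure_pmf.expectation (Dl l) (\<lambda>\<omega>. indicator ?A \<omega> * ?V \<omega>)"
    using bounded by (intro integral_linear_pmf_bounded[where B="real H"]) (simp_all add: indicator_def)
  finally show ?thesis
    unfolding value_on_def .
qed

lemma value_on_le:
  fixes c :: real
  assumes "\<pi> \<in> policies S A H" "0 \<le> c" "c \<le> H"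
    and "\<And>\<omega>. \<omega> \<in> set_pmf (Dl l) \<Longrightarrow> \<omega> \<in> X \<Longrightarrow> episode_value H \<pi> (fst \<omega>) \<le> c"
  shows "value_on H (Dl l) X \<pi> \<le> c * measure_pmf.prob (Dl l) X"
proof -
  have "value_on H (Dl l) X \<pi> \<le> measure_pmf.expectation (Dl l) (\<lambda>\<omega>. indicator X \<omega> * c)"
    unfolding value_on_def using assms episode_value_bounded[OF assms(1)]
    by (intro integral_indicator_mono_pmf[where B="real H"]) auto
  then show ?thesis
    by (simp add: mult.commute)
qed

lemma value_on_ge:
  fixes f :: "dmodel \<times> ledger \<Rightarrow> real"
  assumes "\<pi> \<in> policies S A H" "\<And>\<omega>. \<omega> \<in> set_pmf (Dl l) \<Longrightarrow> \<bar>f \<omega>\<bar> \<le> H"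
    and "\<And>\<omega>. \<omega> \<in> set_pmf (Dl l) \<Longrightarrow> \<omega> \<in> X \<Longrightarrow> f \<omega> \<le> episode_value H \<pi> (fst \<omega>)"
  shows "measure_pmf.expectation (Dl l) (\<lambda>\<omega>. indicator X \<omega> * f \<omega>) \<le> value_on H (Dl l) X \<pi>"
  unfolding value_on_def using assms episode_value_bounded[OF assms(1)]
  by (intro integral_indicator_mono_pmf[where B="real H"]) auto

end

end

section \<open>The exploration step\<close>

text \<open>In the application 1/N is the hallucination probability, W the posterior weight of the
  hallucinated signal, \<Phi> and Z the probabilities of the censored ledger and of its agreement
  with the hallucination, R the mean reward of the exit triple and \<kappa> = f_min^(SAH).\<close>
lemma exploration_beats_exploitation:
  fixes N :: nat and W \<Phi> Z R r H \<kappa> :: real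
  assumes \<kappa>: "0 < \<kappa>" "\<kappa> \<le> 1" and r: "0 < r" "r \<le> R" "R \<le> H"
    and "0 < Z" "0 \<le> W" "0 \<le> \<Phi>" and W: "W * \<Phi> * \<kappa> \<le> Z"
    and N: "6 * H / (r * \<kappa>) \<le> N"
  shows "W / N * (H * \<Phi>) + (1 - 1 / N) * (r / 2 * Z) < W / N * (\<Phi> * R) + (1 - 1 / N) * (Z * R)"
proof -
  have "r * \<kappa> \<le> H"
    using \<kappa> r mult_left_le[of \<kappa> r] by linarith
  have "6 * H \<le> N * (r * \<kappa>)"
    using N \<kappa> r by (simp add: field_simps)
  then have "0 < real N * (r * \<kappa>)"
    using r by linarith
  then have N_pos: "0 < real N"
    using r \<kappa> by (simp add: zero_less_mult_iff)
  have "W * \<Phi> * (H - R) \<le> Z / \<kappa> * (H - R)"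
    using W \<kappa> r by (intro mult_right_mono) (auto simp: field_simps)
  also have "\<dots> \<le> Z / \<kappa> * H"
    using \<kappa> r \<open>0 < Z\<close> by (intro mult_left_mono) auto
  finally have loss: "1 / N * (W * \<Phi> * (H - R)) \<le> 1 / N * (Z / \<kappa> * H)"
    using N_pos by (intro mult_left_mono) auto
  have "(real N - 1) * (r * \<kappa>) = N * (r * \<kappa>) - r * \<kappa>"
    by (simp add: algebra_simps)
  then have "0 < (real N - 1) * (r * \<kappa>) - 2 * H"
    using \<open>6 * H \<le> N * (r * \<kappa>)\<close> \<open>r * \<kappa> \<le> H\<close> r by linarith
  then have "0 < ((real N - 1) * (r * \<kappa>) - 2 * H) / (2 * N * \<kappa>)"
    using N_pos \<kappa> by (intro divide_pos_pos) auto
  also have "\<dots> = (1 - 1 / N) * (r / 2) - 1 / N * (H / \<kappa>)"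
    using N_pos \<kappa> by (simp add: field_simps)
  finally have "Z * (1 / N * (H / \<kappa>)) < Z * ((1 - 1 / N) * (r / 2))"
    using \<open>0 < Z\<close> by (intro mult_strict_left_mono) auto
  also have "\<dots> \<le> Z * ((1 - 1 / N) * (R - r / 2))"
    using N_pos r \<open>0 < Z\<close> by (intro mult_left_mono) (auto simp: field_simps)
  finally have gain: "1 / N * (Z / \<kappa> * H) < (1 - 1 / N) * (Z * (R - r / 2))"
    by (simp add: mult_ac)
  have "W / N * (\<Phi> * R) + (1 - 1 / N) * (Z * R) - (W / N * (H * \<Phi>) + (1 - 1 / N) * (r / 2 * Z))
      = (1 - 1 / N) * (Z * (R - r / 2)) - 1 / N * (W * \<Phi> * (H - R))"
    by (simp add: algebra_simps)
  then show ?thesis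
    using gain loss by (smt (verit))
qed

locale tuned_hidden_hallucination = hidden_hallucination +
  assumes r_min_pos: "0 < r_min S A H p"
    and eps_eq: "\<epsilon> = r_min S A H p / (2 * real H)"
    and f_min_pos: "0 < f_min S A H p \<epsilon>"
    and phase_length: "6 * real H / (r_min S A H p * f_min S A H p \<epsilon> ^ (S * A * H)) \<le> real N"
begin

lemma phases_nonempty: "0 < N"
proof -
  have "0 < 6 * real H / (r_min S A H p * f_min S A H p \<epsilon> ^ (S * A * H))"
    using pos r_min_pos f_min_pos by simp
  then show ?thesis
    using phase_length by linarith
qed

context
  fixes l Q assumes kernel: "policy_kernel l Q"
begin

lemma prob_punish_ge:
  assumes "E \<subseteq> triples S A H" "t0 \<in> triples S A H" "t0 \<notin> E" "explored 1 L0 = E"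
  shows "measure_pmf.prob (Dl l) (same_cens L0) * f_min S A H p \<epsilon> ^ (S * A * H)
    \<le> measure_pmf.prob (Dl l) {\<omega>. cens (snd \<omega>) = cens L0 \<and> pun 1 \<epsilon> (fst \<omega>) (snd \<omega>)}"
proof -
  let ?C = "f_min S A H p \<epsilon>"
  have "card E \<le> S * A * H"
    using card_mono[OF finite_triples assms(1)] by (simp add: card_triples)
  then have "?C ^ (S * A * H) \<le> ?C ^ card E"
    using f_min_pos f_min_le_1 by (intro power_decreasing) auto
  also have "\<dots> \<le> (\<Prod>t\<in>E. measure_pmf.prob p {\<mu>. rew3 \<mu> t \<in> {..\<epsilon>}})"
    using f_min_le_prob assms(1) f_min_pos prod_mono[of E "\<lambda>_. ?C"] by (force simp: subset_iff)
  finally have "measure_pmf.prob (Dl l) (same_cens L0) * ?C ^ (S * A * H)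
      \<le> measure_pmf.prob (Dl l) (same_cens L0) * (\<Prod>t\<in>E. measure_pmf.prob p {\<mu>. rew3 \<mu> t \<in> {..\<epsilon>}})"
    by (intro mult_left_mono) auto
  also have "\<dots> = measure_pmf.prob (Dl l) {\<omega>. cens (snd \<omega>) = cens L0 \<and> (\<forall>t\<in>E. rew3 (fst \<omega>) t \<in> {..\<epsilon>})}"
    using expectation_cens_rewards[OF kernel assms(1-3), of "\<lambda>_. 1" "cens L0" "\<lambda>_. {..\<epsilon>}"] by simp
  also have "{\<omega>. cens (snd \<omega>) = cens L0 \<and> (\<forall>t\<in>E. rew3 (fst \<omega>) t \<in> {..\<epsilon>})}
      = {\<omega>. cens (snd \<omega>) = cens L0 \<and> pun 1 \<epsilon> (fst \<omega>) (snd \<omega>)}"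
    using assms(4) by (auto simp: pun_def dest: explored_cong_cens[where n=1])
  finally show ?thesis .
qed

context
  fixes \<mu>0 pols0 \<mu>h
  assumes \<mu>0: "\<mu>0 \<in> set_pmf p" and pols0: "pols0 \<in> set_pmf (Q \<mu>0)"
    and \<mu>h: "\<mu>h \<in> set_pmf (post 1 \<epsilon> (Dl l) (ledger_of H \<mu>0 pols0))"
begin

abbreviation ledger0 :: ledger where
  "ledger0 \<equiv> ledger_of H \<mu>0 pols0"

text \<open>The punish event makes the hallucinated model poor on the explored triples, and its
  probability, at least f_min^(SAH) times that of the censored ledger, bounds the posterior
  weight of the hallucinated signal.\<close>
lemma hallucination_punished:
  assumes "t0 \<in> triples S A H" "t0 \<notin> explored 1 (ledger_of H \<mu>0 pols0)"
  shows "\<forall>t\<in>explored 1 ledger0. rew3 \<mu>h t \<le> \<epsilon>"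
    and "0 < measure_pmf.prob (Dl l) (agreeing_with ledger0 \<mu>h)"
    and "measure_pmf.prob (post 1 \<epsilon> (Dl l) ledger0) {\<mu>. hal 1 ledger0 \<mu> = hal 1 ledger0 \<mu>h}
      * measure_pmf.prob (Dl l) (same_cens ledger0) * f_min S A H p \<epsilon> ^ (S * A * H)
      \<le> measure_pmf.prob (Dl l) (agreeing_with ledger0 \<mu>h)"
proof -
  define Pun :: "(dmodel \<times> ledger) set"
    where "Pun = {\<omega>. cens (snd \<omega>) = cens ledger0 \<and> pun 1 \<epsilon> (fst \<omega>) (snd \<omega>)}"
  have Pun_ge: "measure_pmf.prob (Dl l) (same_cens ledger0) * f_min S A H p \<epsilon> ^ (S * A * H)
      \<le> measure_pmf.prob (Dl l) Pun"
    unfolding Pun_def using explored_ledger_subset_triples[OF kernel \<mu>0 pols0] assms(1,2)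
    by (intro prob_punish_ge) auto
  have "0 < measure_pmf.prob (Dl l) (same_cens ledger0) * f_min S A H p \<epsilon> ^ (S * A * H)"
    using measure_pmf_posI[OF phase_law_memI[OF kernel \<mu>0 pols0]] f_min_pos by simp
  then have "set_pmf (Dl l) \<inter> Pun \<noteq> {}"
    using Pun_ge measure_pmf_zero_iff[of "Dl l" Pun] by linarith
  moreover have "Pun = {(\<mu>, L). cens L = cens ledger0 \<and> pun 1 \<epsilon> \<mu> L}"
    by (auto simp: Pun_def)
  ultimately have "post 1 \<epsilon> (Dl l) ledger0 = map_pmf fst (cond_pmf (Dl l) Pun)"
    by (simp add: post_def)
  then obtain L' where L': "(\<mu>h, L') \<in> set_pmf (Dl l)" "(\<mu>h, L') \<in> Pun"
    using \<mu>h \<open>set_pmf (Dl l) \<inter> Pun \<noteq> {}\<close> by auto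
  then show "\<forall>t\<in>explored 1 ledger0. rew3 \<mu>h t \<le> \<epsilon>"
    using explored_cong_cens[of L' ledger0 1] by (auto simp: Pun_def pun_def)
  show "0 < measure_pmf.prob (Dl l) (agreeing_with ledger0 \<mu>h)"
    using measure_pmf_posI[OF L'(1)] L'(2) by (simp add: Pun_def agrees_on_def)
  have "0 \<le> measure_pmf.prob (post 1 \<epsilon> (Dl l) ledger0) {\<mu>. hal 1 ledger0 \<mu> = hal 1 ledger0 \<mu>h}"
    by simp
  from mult_left_mono[OF Pun_ge this]
  show "measure_pmf.prob (post 1 \<epsilon> (Dl l) ledger0) {\<mu>. hal 1 ledger0 \<mu> = hal 1 ledger0 \<mu>h}
      * measure_pmf.prob (Dl l) (same_cens ledger0) * f_min S A H p \<epsilon> ^ (S * A * H)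
      \<le> measure_pmf.prob (Dl l) (agreeing_with ledger0 \<mu>h)"
    using prob_post_hal_le[of \<epsilon> "Dl l" ledger0 \<mu>h] unfolding Pun_def by (simp add: mult.assoc)
qed

lemma agent_prefers_own_policy:
  assumes "\<pi>1 \<in> policies S A H"
  defines "W \<equiv> measure_pmf.prob (post 1 \<epsilon> (Dl l) ledger0) {\<mu>. hal 1 ledger0 \<mu> = hal 1 ledger0 \<mu>h}"
    and "\<pi> \<equiv> agent S A H tb (sigJ N 1 \<epsilon> (Dl l)) (hal 1 ledger0 \<mu>h)"
  shows "W / N * value_on H (Dl l) (same_cens ledger0) \<pi>1 + (1 - 1 / N) * value_on H (Dl l) (agreeing_with ledger0 \<mu>h) \<pi>1
    \<le> W / N * value_on H (Dl l) (same_cens ledger0) \<pi> + (1 - 1 / N) * value_on H (Dl l) (agreeing_with ledger0 \<mu>h) \<pi>"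
proof -
  have "True \<in> set_pmf (bernoulli_pmf (1 / real N))"
    using phases_nonempty by (simp add: set_pmf_iff)
  then have "(\<mu>0, hal 1 ledger0 \<mu>h) \<in> set_pmf (sigJ N 1 \<epsilon> (Dl l))"
    using phase_law_memI[OF kernel \<mu>0 pols0] \<mu>h unfolding sigJ_def by (force simp: set_bind_pmf)
  then have "value_on H (sigJ N 1 \<epsilon> (Dl l)) {\<omega>. snd \<omega> = hal 1 ledger0 \<mu>h} \<pi>1
      \<le> value_on H (sigJ N 1 \<epsilon> (Dl l)) {\<omega>. snd \<omega> = hal 1 ledger0 \<mu>h} \<pi>"
    unfolding \<pi>_def using assms(1) by (rule value_on_agent_ge[OF pos(2) tie_break])
  moreover have "\<pi> \<in> policies S A H"
    unfolding \<pi>_def by (rule agent_maximizes(1)[OF pos(2) tie_break])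
  ultimately show ?thesis
    unfolding W_def using value_on_signal[OF kernel phases_nonempty] assms(1) by simp
qed

lemma exploiting_value_le:
  assumes "\<pi> \<in> policies S A H" "pols0 \<noteq> []" "visits H \<mu>0 \<pi> \<subseteq> explored 1 ledger0"
    and poor: "\<forall>t\<in>explored 1 ledger0. rew3 \<mu>h t \<le> \<epsilon>"
  shows "value_on H (Dl l) (agreeing_with ledger0 \<mu>h) \<pi>
    \<le> r_min S A H p / 2 * measure_pmf.prob (Dl l) (agreeing_with ledger0 \<mu>h)"
proof -
  have H\<epsilon>: "real H * \<epsilon> = r_min S A H p / 2"
    using pos(3) by (simp add: eps_eq)
  have small: "episode_value H \<pi> (fst \<omega>) \<le> real H * \<epsilon>"
    if \<omega>: "\<omega> \<in> set_pmf (Dl l)" "\<omega> \<in> agreeing_with ledger0 \<mu>h" for \<omega>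
  proof (rule episode_value_le_if_visited)
    show "st (fst \<omega>) \<pi>' h = st \<mu>0 \<pi>' h" if "\<pi>' \<in> set pols0" "h < H" for \<pi>' h
      using phase_law_same_trajectories[OF kernel \<omega>(1)] \<omega>(2) that by simp
    show "visits H \<mu>0 \<pi> \<subseteq> (\<Union>\<pi>'\<in>set pols0. visits H \<mu>0 \<pi>')"
      using assms(3) by (simp add: explored_ledger_of)
    show "rew3 (fst \<omega>) t \<le> \<epsilon>" if "t \<in> (\<Union>\<pi>'\<in>set pols0. visits H \<mu>0 \<pi>')" for t
      using that \<omega>(2) poor by (auto simp: explored_ledger_of agrees_on_def)
  qed (rule assms(2))
  have "1 \<le> real H"
    using pos(3) by simp
  then show ?thesis
    using small r_min_pos r_min_le_1 unfolding H\<epsilon> by (intro value_on_le[OF kernel assms(1)]) auto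
qed

text \<open>A policy that follows visited triples until stage h1 and then exits to t0 earns at least
  the reward of t0 in every model compatible with the censored ledger; the mean of that reward
  factors out.\<close>
lemma exploring_value_ge:
  assumes "\<pi>1 \<in> policies S A H" "pols0 \<noteq> []" "h1 < H"
    and before: "\<And>h'. h' < h1 \<Longrightarrow> (st \<mu>0 \<pi>1 h', \<pi>1 (st \<mu>0 \<pi>1 h') h', h') \<in> explored 1 ledger0"
    and t0: "t0 = (st \<mu>0 \<pi>1 h1, \<pi>1 (st \<mu>0 \<pi>1 h1) h1, h1)" "t0 \<notin> explored 1 ledger0"
  shows "measure_pmf.prob (Dl l) {\<omega>. cens (snd \<omega>) = cens ledger0 \<and> (\<forall>t\<in>explored 1 ledger0. rew3 (fst \<omega>) t \<in> Bs t)}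
      * measure_pmf.expectation p (\<lambda>\<mu>. rew3 \<mu> t0)
    \<le> value_on H (Dl l) {\<omega>. cens (snd \<omega>) = cens ledger0 \<and> (\<forall>t\<in>explored 1 ledger0. rew3 (fst \<omega>) t \<in> Bs t)} \<pi>1"
    (is "_ \<le> value_on H (Dl l) ?X \<pi>1")
proof -
  have "t0 \<in> visits H \<mu>0 \<pi>1"
    using assms(3) by (auto simp: t0 visits_def)
  then have "t0 \<in> triples S A H"
    using visits_subset_triples[OF valid[OF \<mu>0] assms(1)] by auto
  have "\<bar>rew3 (fst \<omega>) t0\<bar> \<le> real H" if "\<omega> \<in> set_pmf (Dl l)" for \<omega>
    using rew3_bounds[OF phase_law_fst[OF kernel that] \<open>t0 \<in> triples S A H\<close>] pos(3) by auto
  moreover have "rew3 (fst \<omega>) t0 \<le> episode_value H \<pi>1 (fst \<omega>)"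
    if "\<omega> \<in> set_pmf (Dl l)" "cens (snd \<omega>) = cens ledger0" for \<omega>
    unfolding t0 using before
    by (intro exit_reward_le_episode_value[OF valid[OF phase_law_fst[OF kernel that(1)]] assms(1)
        phase_law_same_trajectories[OF kernel that] assms(2,3)])
      (auto simp: explored_ledger_of)
  ultimately have "measure_pmf.expectation (Dl l) (\<lambda>\<omega>. indicator ?X \<omega> * rew3 (fst \<omega>) t0)
      \<le> value_on H (Dl l) ?X \<pi>1"
    by (intro value_on_ge[OF kernel assms(1)]) auto
  moreover have "measure_pmf.expectation (Dl l) (\<lambda>\<omega>. indicator ?X \<omega> * rew3 (fst \<omega>) t0)
      = measure_pmf.prob (Dl l) ?X * measure_pmf.expectation p (\<lambda>\<mu>. rew3 \<mu> t0)"
    using expectation_cens_rewards[OF kernel explored_ledger_subset_triples[OF kernel \<mu>0 pols0]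
        \<open>t0 \<in> triples S A H\<close> t0(2), of id "cens ledger0" Bs]
      expectation_cens_rewards[OF kernel explored_ledger_subset_triples[OF kernel \<mu>0 pols0]
        \<open>t0 \<in> triples S A H\<close> t0(2), of "\<lambda>_. 1" "cens ledger0" Bs]
    by simp
  ultimately show ?thesis
    by simp
qed

lemma exploration_step:
  assumes unexplored: "\<not> reachable S A H \<mu>0 \<subseteq> explored 1 (ledger_of H \<mu>0 pols0)"
  shows "\<not> visits H \<mu>0 (agent S A H tb (sigJ N 1 \<epsilon> (Dl l)) (hal 1 (ledger_of H \<mu>0 pols0) \<mu>h))
    \<subseteq> explored 1 (ledger_of H \<mu>0 pols0)"
proof
  define E \<pi> where "E = explored 1 ledger0"
    and "\<pi> = agent S A H tb (sigJ N 1 \<epsilon> (Dl l)) (hal 1 ledger0 \<mu>h)"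
  define W \<Phi> Z where "W = measure_pmf.prob (post 1 \<epsilon> (Dl l) ledger0) {\<mu>. hal 1 ledger0 \<mu> = hal 1 ledger0 \<mu>h}"
    and "\<Phi> = measure_pmf.prob (Dl l) (same_cens ledger0)" and "Z = measure_pmf.prob (Dl l) (agreeing_with ledger0 \<mu>h)"
  assume "visits H \<mu>0 (agent S A H tb (sigJ N 1 \<epsilon> (Dl l)) (hal 1 (ledger_of H \<mu>0 pols0) \<mu>h))
    \<subseteq> explored 1 (ledger_of H \<mu>0 pols0)"
  then have stays: "visits H \<mu>0 \<pi> \<subseteq> E"
    by (simp add: \<pi>_def E_def)
  have \<pi>: "\<pi> \<in> policies S A H"
    unfolding \<pi>_def by (rule agent_maximizes(1)[OF pos(2) tie_break])
  have "pols0 \<noteq> []"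
  proof
    assume "pols0 = []"
    moreover have "(st \<mu>0 \<pi> 0, \<pi> (st \<mu>0 \<pi> 0) 0, 0) \<in> visits H \<mu>0 \<pi>"
      using pos(3) by (auto simp: visits_def)
    ultimately show False
      using stays by (auto simp: E_def explored_ledger_of)
  qed
  obtain \<pi>1 h1 where \<pi>1: "\<pi>1 \<in> policies S A H" "h1 < H"
    and exit: "(st \<mu>0 \<pi>1 h1, \<pi>1 (st \<mu>0 \<pi>1 h1) h1, h1) \<notin> E"
    and before: "\<And>h'. h' < h1 \<Longrightarrow> (st \<mu>0 \<pi>1 h', \<pi>1 (st \<mu>0 \<pi>1 h') h', h') \<in> E"
    using first_exit[OF unexplored[folded E_def]] by blast
  define t0 where "t0 = (st \<mu>0 \<pi>1 h1, \<pi>1 (st \<mu>0 \<pi>1 h1) h1, h1)"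
  define R where "R = measure_pmf.expectation p (\<lambda>\<mu>. rew3 \<mu> t0)"
  have t0: "t0 \<in> triples S A H" "t0 \<notin> E"
    using visits_subset_triples[OF valid[OF \<mu>0] \<pi>1(1)] \<pi>1(2) exit by (auto simp: t0_def visits_def)
  note punished = hallucination_punished[OF t0[unfolded E_def]]
  have R: "r_min S A H p \<le> R" "R \<le> real H"
    using r_min_le_mean[OF t0(1)] mean_reward_le_1[OF t0(1)] pos(3) by (auto simp: R_def)
  have "W / N * (\<Phi> * R) + (1 - 1 / N) * (Z * R)
      \<le> W / N * value_on H (Dl l) (same_cens ledger0) \<pi>1 + (1 - 1 / N) * value_on H (Dl l) (agreeing_with ledger0 \<mu>h) \<pi>1"
  proof (intro add_mono mult_left_mono)
    show "\<Phi> * R \<le> value_on H (Dl l) (same_cens ledger0) \<pi>1"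
      using exploring_value_ge[OF \<pi>1(1) \<open>pols0 \<noteq> []\<close> \<pi>1(2) before[unfolded E_def] t0_def
          t0(2)[unfolded E_def], of "\<lambda>_. UNIV"]
      by (simp add: \<Phi>_def R_def)
    show "Z * R \<le> value_on H (Dl l) (agreeing_with ledger0 \<mu>h) \<pi>1"
      using exploring_value_ge[OF \<pi>1(1) \<open>pols0 \<noteq> []\<close> \<pi>1(2) before[unfolded E_def] t0_def
          t0(2)[unfolded E_def], of "\<lambda>t. {rew3 \<mu>h t}"]
      by (simp add: Z_def R_def agrees_on_def)
  qed (use phases_nonempty in \<open>auto simp: W_def\<close>)
  also have "\<dots> \<le> W / N * value_on H (Dl l) (same_cens ledger0) \<pi> + (1 - 1 / N) * value_on H (Dl l) (agreeing_with ledger0 \<mu>h) \<pi>"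
    unfolding W_def \<pi>_def by (rule agent_prefers_own_policy[OF \<pi>1(1)])
  also have "\<dots> \<le> W / N * (real H * \<Phi>) + (1 - 1 / N) * (r_min S A H p / 2 * Z)"
  proof (intro add_mono mult_left_mono)
    show "value_on H (Dl l) (same_cens ledger0) \<pi> \<le> real H * \<Phi>"
      unfolding \<Phi>_def by (intro value_on_le[OF kernel \<pi>]) (auto intro: abs_le_D1[OF episode_value_bounded[OF kernel \<pi>]])
    show "value_on H (Dl l) (agreeing_with ledger0 \<mu>h) \<pi> \<le> r_min S A H p / 2 * Z"
      unfolding Z_def using \<pi> \<open>pols0 \<noteq> []\<close> stays punished(1)
      by (intro exploiting_value_le) (auto simp: E_def)
  qed (use phases_nonempty in \<open>auto simp: W_def\<close>)
  finally have "W / N * (\<Phi> * R) + (1 - 1 / N) * (Z * R) \<le> W / N * (real H * \<Phi>) + (1 - 1 / N) * (r_min S A H p / 2 * Z)" .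
  moreover have "W / N * (real H * \<Phi>) + (1 - 1 / N) * (r_min S A H p / 2 * Z) < W / N * (\<Phi> * R) + (1 - 1 / N) * (Z * R)"
    using phase_length f_min_pos f_min_le_1 punished(2,3)
    by (intro exploration_beats_exploitation[OF _ _ r_min_pos R])
      (simp_all add: W_def \<Phi>_def Z_def power_le_one)
  ultimately show False
    by linarith
qed

end

end

end

section \<open>Coverage\<close>

lemma growing_union_covers:
  fixes V :: "nat \<Rightarrow> 'a set"
  assumes T: "finite T" "R \<subseteq> T" "card T \<le> n"
    and V: "\<And>j. j < n \<Longrightarrow> V j \<subseteq> R"
    and grows: "\<And>k. k < n \<Longrightarrow> \<not> R \<subseteq> (\<Union>j<k. V j) \<Longrightarrow> \<not> V k \<subseteq> (\<Union>j<k. V j)"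
  shows "R \<subseteq> (\<Union>j<n. V j)"
proof (rule ccontr)
  define U where "U k = (\<Union>j<k. V j)" for k
  assume uncovered: "\<not> R \<subseteq> (\<Union>j<n. V j)"
  have U_T: "U k \<subseteq> T" if k: "k \<le> n" for k
  proof -
    have "V j \<subseteq> T" if "j < k" for j
      using V[of j] that k T(2) by auto
    then show ?thesis
      by (auto simp: U_def)
  qed
  have "k \<le> card (U k)" if "k \<le> n" for k
    using that
  proof (induction k)
    case (Suc k)
    have "U k \<subseteq> U n"
      unfolding U_def using Suc.prems by (intro UN_mono) auto
    then have "\<not> V k \<subseteq> U k"
      using grows[of k] uncovered Suc.prems by (auto simp: U_def)
    then have "U k \<subset> U (Suc k)"
      by (auto simp: U_def lessThan_Suc)
    moreover have "finite (U (Suc k))"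
      using U_T[OF Suc.prems] T(1) by (rule finite_subset)
    ultimately have "card (U k) < card (U (Suc k))"
      by (rule psubset_card_mono[rotated])
    then show ?case
      using Suc by simp
  qed simp
  then have "card T \<le> card (U n)"
    using T(3) by (meson le_refl order_trans)
  then have "U n = T"
    using card_seteq[OF T(1) U_T] by blast
  then show False
    using uncovered T(2) by (simp add: U_def)
qed

context tuned_hidden_hallucination
begin

lemma phase_law_Suc_elem:
  assumes kernel: "policy_kernel m Q" and "\<omega>' \<in> set_pmf (Dl (Suc m))"
  obtains \<mu> pols \<mu>h where "\<mu> \<in> set_pmf p" "pols \<in> set_pmf (Q \<mu>)"
    "\<mu>h \<in> set_pmf (post 1 \<epsilon> (Dl m) (ledger_of H \<mu> pols))"
    "\<omega>' = (\<mu>, ledger_of H \<mu> (pols @ [agent S A H tb (sigJ N 1 \<epsilon> (Dl m)) (hal 1 (ledger_of H \<mu> pols) \<mu>h)]))"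
proof -
  obtain \<omega> where "\<omega> \<in> set_pmf (Dl m)" "\<omega>' \<in> set_pmf (hh_step S A H N 1 \<epsilon> tb (Dl m) \<omega>)"
    using assms(2) by auto
  moreover obtain \<mu> pols where "\<mu> \<in> set_pmf p" "pols \<in> set_pmf (Q \<mu>)" "\<omega> = (\<mu>, ledger_of H \<mu> pols)"
    using \<open>\<omega> \<in> set_pmf (Dl m)\<close> by (rule phase_law_elem[OF kernel])
  ultimately show ?thesis
    using that by (auto simp: hh_step_def Let_def ledger_of_snoc)
qed

lemma new_triple_each_phase:
  assumes "\<omega> \<in> set_pmf (Dl m)" "l < m"
    and "\<not> reachable S A H (fst \<omega>) \<subseteq> (\<Union>j<l. ent_visits (snd \<omega> ! j))"
  shows "\<not> ent_visits (snd \<omega> ! l) \<subseteq> (\<Union>j<l. ent_visits (snd \<omega> ! j))"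
  using assms
proof (induction m arbitrary: \<omega>)
  case (Suc m)
  obtain Q where kernel: "policy_kernel m Q"
    using policy_kernel_exists by blast
  obtain \<mu> pols \<mu>h where \<mu>: "\<mu> \<in> set_pmf p" "pols \<in> set_pmf (Q \<mu>)"
    and \<mu>h: "\<mu>h \<in> set_pmf (post 1 \<epsilon> (Dl m) (ledger_of H \<mu> pols))"
    and \<omega>: "\<omega> = (\<mu>, ledger_of H \<mu> (pols @ [agent S A H tb (sigJ N 1 \<epsilon> (Dl m)) (hal 1 (ledger_of H \<mu> pols) \<mu>h)]))"
    using phase_law_Suc_elem[OF kernel Suc.prems(1)] by blast
  have len: "length pols = m"
    using kernel_policies[OF kernel \<mu>] by simp
  have old: "snd \<omega> ! j = ledger_of H \<mu> pols ! j" if "j < m" for j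
    using that len by (simp add: \<omega> ledger_of_def nth_append)
  have prefix: "(\<Union>j<k. ent_visits (snd \<omega> ! j)) = (\<Union>j<k. ent_visits (ledger_of H \<mu> pols ! j))"
    if "k \<le> m" for k
    using old that by simp
  show ?case
  proof (cases "l < m")
    case True
    have "\<not> reachable S A H \<mu> \<subseteq> (\<Union>j<l. ent_visits (ledger_of H \<mu> pols ! j))"
      using Suc.prems(3) prefix[of l] True by (simp add: \<omega>)
    then have "\<not> ent_visits (ledger_of H \<mu> pols ! l) \<subseteq> (\<Union>j<l. ent_visits (ledger_of H \<mu> pols ! j))"
      using Suc.IH[OF phase_law_memI[OF kernel \<mu>] True] by simp
    then show ?thesis
      using prefix[of l] old[OF True] True by simp
  next
    case False
    then have "l = m"
      using Suc.prems(2) by simp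
    have "(\<Union>j<l. ent_visits (snd \<omega> ! j)) = explored 1 (ledger_of H \<mu> pols)"
      using prefix[of l] \<open>l = m\<close> UN_ent_visits_ledger_of[of H \<mu> pols, unfolded len]
      by simp
    moreover have "snd \<omega> ! l = (agent S A H tb (sigJ N 1 \<epsilon> (Dl m)) (hal 1 (ledger_of H \<mu> pols) \<mu>h),
        raw_traj H \<mu> (agent S A H tb (sigJ N 1 \<epsilon> (Dl m)) (hal 1 (ledger_of H \<mu> pols) \<mu>h)))"
      using \<open>l = m\<close> len by (simp add: \<omega> ledger_of_def nth_append)
    ultimately show ?thesis
      using exploration_step[OF kernel \<mu> \<mu>h] Suc.prems(3) by (simp add: \<omega> ent_visits_raw_traj)
  qed
qed simp

lemma all_reachable_visited:
  assumes "\<omega> \<in> set_pmf (Dl (S * A * H))"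
  shows "reachable S A H (fst \<omega>) \<subseteq> (\<Union>l<S * A * H. phase_visits S A H N 1 \<epsilon> tb p l \<omega>)"
proof -
  obtain Q where kernel: "policy_kernel (S * A * H) Q"
    using policy_kernel_exists by blast
  obtain \<mu> pols where \<mu>: "\<mu> \<in> set_pmf p" "pols \<in> set_pmf (Q \<mu>)" and \<omega>: "\<omega> = (\<mu>, ledger_of H \<mu> pols)"
    using assms by (rule phase_law_elem[OF kernel])
  have pols: "set pols \<subseteq> policies S A H" "length pols = S * A * H"
    using kernel_policies[OF kernel \<mu>] by auto
  have "reachable S A H \<mu> \<subseteq> (\<Union>j<S * A * H. ent_visits (snd \<omega> ! j))"
  proof (rule growing_union_covers[OF finite_triples reachable_subset_triples[OF valid[OF \<mu>(1)]]])
    show "card (triples S A H) \<le> S * A * H"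
      by (simp add: card_triples)
    show "ent_visits (snd \<omega> ! j) \<subseteq> reachable S A H \<mu>" if "j < S * A * H" for j
      using that pols by (force simp: \<omega> ent_visits_ledger_of_nth reachable_def)
    show "\<not> ent_visits (snd \<omega> ! k) \<subseteq> (\<Union>j<k. ent_visits (snd \<omega> ! j))"
      if "k < S * A * H" "\<not> reachable S A H \<mu> \<subseteq> (\<Union>j<k. ent_visits (snd \<omega> ! j))" for k
      using new_triple_each_phase[OF assms that(1)] that(2) by (simp add: \<omega>)
  qed
  then show ?thesis
    by (auto simp: \<omega> phase_visits_def)
qed

end

lemma nat_ceiling_le_double: "1 \<le> x \<Longrightarrow> real (nat \<lceil>x\<rceil>) \<le> 2 * x"
  by linarith

theorem theorem2:
  fixes S A H :: nat and p :: "dmodel pmf" and tb :: "policy set \<Rightarrow> policy"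
    and \<epsilon> C :: real and N K :: nat
  assumes "S > 0" "A > 0" "H > 0"
    and "\<forall>\<mu>\<in>set_pmf p. valid_model S A H \<mu>"
    and "reward_indep S A H p"
    and "\<forall>M. M \<noteq> {} \<longrightarrow> tb M \<in> M"
    and "r_min S A H p > 0"
    and "\<epsilon> = r_min S A H p / (2 * real H)"
    and "C = f_min S A H p \<epsilon>"
    and "C > 0"
    and "N = nat \<lceil>6 * real H / (r_min S A H p * C ^ (S * A * H))\<rceil>"
    and "K = S * A * H * N"
  shows "real K \<le> 12 * real (S * A * H\<^sup>2) / (r_min S A H p * C ^ (S * A * H))
    \<and> (AE \<omega> in measure_pmf (hh_dist S A H N 1 \<epsilon> tb p (S * A * H)).
          reachable S A H (fst \<omega>) \<subseteq> (\<Union>l<S * A * H. phase_visits S A H N 1 \<epsilon> tb p l \<omega>))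
    \<and> (\<forall>m. AE \<omega> in measure_pmf (hh_dist S A H N 1 \<epsilon> tb p m). \<forall>l<m.
          \<not> reachable S A H (fst \<omega>) \<subseteq> (\<Union>j<l. ent_visits (snd \<omega> ! j))
          \<longrightarrow> \<not> ent_visits (snd \<omega> ! l) \<subseteq> (\<Union>j<l. ent_visits (snd \<omega> ! j)))"
proof -
  define x where "x = 6 * real H / (r_min S A H p * C ^ (S * A * H))"
  interpret tuned_hidden_hallucination S A H N \<epsilon> tb p
    using assms real_nat_ceiling_ge[of x] by unfold_locales (auto simp: x_def)
  have "r_min S A H p * C ^ (S * A * H) \<le> 1"
    using r_min_le_1 r_min_pos f_min_le_1 f_min_pos assms(9)
    by (simp add: mult_le_one power_le_one)
  moreover have "0 < r_min S A H p * C ^ (S * A * H)"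
    using r_min_pos assms(10) by simp
  ultimately have "6 * real H \<le> x"
    unfolding x_def by (simp add: le_divide_eq mult_left_le)
  then have "real N \<le> 2 * x"
    using pos(3) nat_ceiling_le_double[of x] assms(11) by (simp add: x_def)
  then have "real K \<le> real (S * A * H) * (2 * x)"
    using assms(12) by (simp add: mult_left_mono)
  also have "\<dots> = 12 * real (S * A * H\<^sup>2) / (r_min S A H p * C ^ (S * A * H))"
    by (simp add: x_def power2_eq_square)
  finally show ?thesis
    using all_reachable_visited new_triple_each_phase by (auto simp: AE_measure_pmf_iff)
qed

end
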